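(* Let $N,N'$ be orchard networks on $X,X'\subseteq[n]$ respectively. Then $N\cong N'$ if and only if $\boldsymbol\mu(N)=\boldsymbol\mu(N')$.
   Context: A (binary) phylogenetic network on a finite set $X\subseteq[n]=\{1,\dots,n\}$ is a directed acyclic graph $N=(V,A)$ without parallel arcs in which every node is exactly one of: the root (indegree 0, outdegree 1; there is exactly one), a leaf (indegree 1, outdegree 0), a tree node (indegree 1, outdegree 2), or a reticulation (indegree 2, outdegree 1); the leaves are identified with the elements of $X$. $V_T(N)$ denotes the set of leaves and tree nodes, $V_H(N)$ the set of reticulations. Two networks are isomorphic ($N\cong N'$) if there is a bijection between their node sets that is the identity on leaves (labels) and maps arcs to arcs and non-arcs to non-arcs. $m(u,v)$ is the number of directed paths from $u$ to $v$ (trivial paths allowed). Extended $\mu$-vectors: $\mu_i(u)=m(u,i)$ for $i\in[n]$ (0 if $i$ is not a leaf), $\mu_0(u)=\sum_{h\in V_H(N)} m(u,h)$, $\mu(u)=(\mu_0(u),\dots,\mu_n(u))$; the extended $\mu$-representation $\boldsymbol\mu(N)$ is the multiset $\{\mu(u)\mid u\in V_T(N)\}$. For distinct leaves $i,j$ with parents $p_i,p_j$: $(i,j)$ is a cherry of $N$ if $p_i=p_j$; a reticulated-cherry of $N$ if $p_i$ is a reticulation, $p_j$ is a tree node and $p_j$ is a parent of $p_i$; reducible if either. Suppressing a node with indegree 1 and outdegree 1 means deleting it and its two arcs and adding an arc from its parent to its child. $N^{(i,j)}$: if $(i,j)$ is a cherry, delete leaf $i$ and its incoming arc, then suppress $p_i$;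 if a reticulated-cherry, delete the arc $p_jp_i$ and suppress $p_i$ and $p_j$. A sequence $S=s_1\cdots s_k$ is reducible in $N$ if $s_1$ is reducible in $N$ and each $s_t$ is reducible in the network obtained by successively reducing $s_1,\dots,s_{t-1}$; $N^S$ is the final network. $N$ is an orchard network if there is a reducible sequence $S$ with $N^S$ equal to the network consisting of a root joined by an arc to a single leaf. *)

theory Defs
  imports Main "HOL-Library.Multiset"
begin

text \<open>A network: finite node set, arc set (no parallel arcs by construction),
  and a labelling of the leaves by elements of [n].\<close>
record 'a net =
  nodes :: "'a set"
  arcs  :: "('a \<times> 'a) set"
  lab   :: "'a \<Rightarrow> nat"

definition indeg :: "'a net \<Rightarrow> 'a \<Rightarrow> nat" where
  "indeg N v = card {u. (u, v) \<in> arcs N}"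

definition outdeg :: "'a net \<Rightarrow> 'a \<Rightarrow> nat" where
  "outdeg N v = card {w. (v, w) \<in> arcs N}"

definition is_root :: "'a net \<Rightarrow> 'a \<Rightarrow> bool" where
  "is_root N v \<longleftrightarrow> v \<in> nodes N \<and> indeg N v = 0 \<and> outdeg N v = 1"

definition is_leaf :: "'a net \<Rightarrow> 'a \<Rightarrow> bool" where
  "is_leaf N v \<longleftrightarrow> v \<in> nodes N \<and> indeg N v = 1 \<and> outdeg N v = 0"

definition is_tree_node :: "'a net \<Rightarrow> 'a \<Rightarrow> bool" where
  "is_tree_node N v \<longleftrightarrow> v \<in> nodes N \<and> indeg N v = 1 \<and> outdeg N v = 2"

definition is_reticulation :: "'a net \<Rightarrow> 'a \<Rightarrow> bool" where
  "is_reticulation N v \<longleftrightarrow> v \<in> nodes N \<and> indeg N v = 2 \<and> outdeg N v = 1"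

definition leaf_set :: "'a net \<Rightarrow> 'a set" where
  "leaf_set N = {v \<in> nodes N. is_leaf N v}"

definition ret_set :: "'a net \<Rightarrow> 'a set" where
  "ret_set N = {v \<in> nodes N. is_reticulation N v}"

definition VT :: "'a net \<Rightarrow> 'a set" where
  "VT N = {v \<in> nodes N. is_leaf N v \<or> is_tree_node N v}"

definition labels :: "'a net \<Rightarrow> nat set" where
  "labels N = lab N ` leaf_set N"

definition phylo_network :: "nat \<Rightarrow> 'a net \<Rightarrow> bool" where
  "phylo_network n N \<longleftrightarrow>
     finite (nodes N) \<and>
     arcs N \<subseteq> nodes N \<times> nodes N \<and>
     acyclic (arcs N) \<and>
     (\<exists>!r. is_root N r) \<and>
     (\<forall>v \<in> nodes N. is_root N v \<or> is_leaf N v \<or> is_tree_node N v \<or> is_reticulation N v) \<and>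
     inj_on (lab N) (leaf_set N) \<and>
     labels N \<subseteq> {1..n}"

definition leaf_node :: "'a net \<Rightarrow> nat \<Rightarrow> 'a" where
  "leaf_node N i = (THE v. v \<in> leaf_set N \<and> lab N v = i)"

definition parent :: "'a net \<Rightarrow> 'a \<Rightarrow> 'a" where
  "parent N v = (THE u. (u, v) \<in> arcs N)"

definition suppress :: "'a net \<Rightarrow> 'a \<Rightarrow> 'a net" where
  "suppress N v = N\<lparr> nodes := nodes N - {v},
     arcs := {e \<in> arcs N. fst e \<noteq> v \<and> snd e \<noteq> v}
             \<union> {(u, w) | u w. (u, v) \<in> arcs N \<and> (v, w) \<in> arcs N} \<rparr>"

definition is_cherry :: "'a net \<Rightarrow> nat \<times> nat \<Rightarrow> bool" where
  "is_cherry N p = (case p of (i, j) \<Rightarrow>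
     i \<noteq> j \<and> i \<in> labels N \<and> j \<in> labels N \<and>
     parent N (leaf_node N i) = parent N (leaf_node N j))"

definition is_ret_cherry :: "'a net \<Rightarrow> nat \<times> nat \<Rightarrow> bool" where
  "is_ret_cherry N p = (case p of (i, j) \<Rightarrow>
     i \<noteq> j \<and> i \<in> labels N \<and> j \<in> labels N \<and>
     is_reticulation N (parent N (leaf_node N i)) \<and>
     is_tree_node N (parent N (leaf_node N j)) \<and>
     (parent N (leaf_node N j), parent N (leaf_node N i)) \<in> arcs N)"

definition reducible_pair :: "'a net \<Rightarrow> nat \<times> nat \<Rightarrow> bool" where
  "reducible_pair N p \<longleftrightarrow> is_cherry N p \<or> is_ret_cherry N p"

definition reduce :: "'a net \<Rightarrow> nat \<times> nat \<Rightarrow> 'a net" where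
  "reduce N p = (case p of (i, j) \<Rightarrow>
     (let li = leaf_node N i; lj = leaf_node N j;
          pi = parent N li; pj = parent N lj in
      if is_cherry N (i, j) then
        suppress (N\<lparr> nodes := nodes N - {li}, arcs := arcs N - {(pi, li)} \<rparr>) pi
      else if is_ret_cherry N (i, j) then
        suppress (suppress (N\<lparr> arcs := arcs N - {(pj, pi)} \<rparr>) pi) pj
      else N))"

fun reducible_seq :: "'a net \<Rightarrow> (nat \<times> nat) list \<Rightarrow> bool" where
  "reducible_seq N [] = True"
| "reducible_seq N (s # S) \<longleftrightarrow> reducible_pair N s \<and> reducible_seq (reduce N s) S"

fun reduce_seq :: "'a net \<Rightarrow> (nat \<times> nat) list \<Rightarrow> 'a net" where
  "reduce_seq N [] = N"
| "reduce_seq N (s # S) = reduce_seq (reduce N s) S"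

definition trivial_net :: "'a net \<Rightarrow> bool" where
  "trivial_net N \<longleftrightarrow> (\<exists>r l. r \<noteq> l \<and> nodes N = {r, l} \<and> arcs N = {(r, l)})"

definition orchard :: "nat \<Rightarrow> 'a net \<Rightarrow> bool" where
  "orchard n N \<longleftrightarrow> phylo_network n N \<and>
     (\<exists>S. reducible_seq N S \<and> trivial_net (reduce_seq N S))"

definition is_path :: "'a net \<Rightarrow> 'a list \<Rightarrow> bool" where
  "is_path N xs \<longleftrightarrow> xs \<noteq> [] \<and> set xs \<subseteq> nodes N \<and>
     (\<forall>k. Suc k < length xs \<longrightarrow> (xs ! k, xs ! Suc k) \<in> arcs N)"

definition npaths :: "'a net \<Rightarrow> 'a \<Rightarrow> 'a \<Rightarrow> nat" where
  "npaths N u v = card {xs. is_path N xs \<and> hd xs = u \<and> last xs = v}"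

definition mu_vec :: "nat \<Rightarrow> 'a net \<Rightarrow> 'a \<Rightarrow> nat list" where
  "mu_vec n N u = map (\<lambda>i. if i = 0 then (\<Sum>h \<in> ret_set N. npaths N u h)
                           else if i \<in> labels N then npaths N u (leaf_node N i)
                           else 0) [0..<Suc n]"

definition mu_rep :: "nat \<Rightarrow> 'a net \<Rightarrow> nat list multiset" where
  "mu_rep n N = image_mset (mu_vec n N) (mset_set (VT N))"

definition net_iso :: "'a net \<Rightarrow> 'b net \<Rightarrow> bool" where
  "net_iso N N' \<longleftrightarrow> (\<exists>f. bij_betw f (nodes N) (nodes N') \<and>
     (\<forall>u \<in> nodes N. \<forall>v \<in> nodes N. (u, v) \<in> arcs N \<longleftrightarrow> (f u, f v) \<in> arcs N') \<and>
     (\<forall>v \<in> leaf_set N. lab N' (f v) = lab N v))"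

end

theory Submission
  imports Defs
begin

text \<open>Path counts are preserved by isomorphisms, so isomorphic networks have equal
  \<mu>-representations. For the converse, follow a reduction sequence of N and induct on its length.
  If (i, j) is a cherry of N, the common parent of i and j has \<mu>-vector (0, e_i + e_j), and in any
  network a node with this vector is the parent of a cherry (i, j). If (i, j) is a reticulated cherry,
  the parent of j has \<mu>-vector (1, e_i + e_j), and a node with this vector is the parent of a
  reticulated cherry (i, j) or (j, i); the orientation is forced by a tree node above the reticulation,
  which has more paths to i than to j. So N' has the same reducible pair. Reducing it deletes these
  vectors and changes every other vector by a map that depends only on (i, j), so the reduced networks
  again have equal \<mu>-representations, and an isomorphism between them extends to N and N'.\<close>

definition children :: "'a net \<Rightarrow> 'a \<Rightarrow> 'a set" where "children N v = {w. (v,w) \<in> arcs N}"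
definition parents :: "'a net \<Rightarrow> 'a \<Rightarrow> 'a set" where "parents N v = {u. (u,v) \<in> arcs N}"
definition path_set :: "'a net \<Rightarrow> 'a \<Rightarrow> 'a \<Rightarrow> 'a list set" where
  "path_set N u v = {xs. is_path N xs \<and> hd xs = u \<and> last xs = v}"

definition mu_leaf :: "'a net \<Rightarrow> 'a \<Rightarrow> nat \<Rightarrow> nat" where
  "mu_leaf N x k = (if k \<in> labels N then npaths N x (leaf_node N k) else 0)"
definition mu_ret :: "'a net \<Rightarrow> 'a \<Rightarrow> nat" where "mu_ret N x = (\<Sum>h\<in>ret_set N. npaths N x h)"
definition leaf_paths :: "'a net \<Rightarrow> 'a \<Rightarrow> nat" where "leaf_paths N x = (\<Sum>l\<in>leaf_set N. npaths N x l)"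
text \<open>The \<mu>-vector of a node as a pair (\<mu>_0, k \<mapsto> \<mu>_k); unlike mu_vec it does
  not depend on n.\<close>
definition mu_pair :: "'a net \<Rightarrow> 'a \<Rightarrow> nat \<times> (nat \<Rightarrow> nat)" where "mu_pair N x = (mu_ret N x, mu_leaf N x)"
definition mu_profile :: "'a net \<Rightarrow> (nat \<times> (nat \<Rightarrow> nat)) multiset" where
  "mu_profile N = image_mset (mu_pair N) (mset_set (VT N))"
definition mu_list :: "nat \<Rightarrow> nat \<times> (nat \<Rightarrow> nat) \<Rightarrow> nat list" where
  "mu_list n s = map (\<lambda>k. if k = 0 then fst s else snd s k) [0..<Suc n]"
definition mu_unlist :: "nat \<Rightarrow> nat list \<Rightarrow> nat \<times> (nat \<Rightarrow> nat)" where
  "mu_unlist n xs = (xs ! 0, \<lambda>k. if 1 \<le> k \<and> k \<le> n then xs ! k else 0)"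

lemma mu_vec_mu_list: "mu_vec n N u = mu_list n (mu_pair N u)"
  unfolding mu_vec_def mu_list_def mu_pair_def mu_leaf_def mu_ret_def by simp

lemma mu_rep_mu_list: "mu_rep n N = image_mset (mu_list n) (mu_profile N)"
proof -
  have "mu_vec n N = (\<lambda>u. mu_list n (mu_pair N u))" by (rule ext) (rule mu_vec_mu_list)
  thus ?thesis unfolding mu_rep_def mu_profile_def by (simp add: multiset.map_comp comp_def)
qed

lemma mu_unlist_mu_list: assumes "\<And>k. snd s k \<noteq> 0 \<Longrightarrow> 1 \<le> k \<and> k \<le> n" shows "mu_unlist n (mu_list n s) = s"
proof -
  have "(\<lambda>k. if 1 \<le> k \<and> k \<le> n then mu_list n s ! k else 0) = snd s"
  proof
    fix k show "(if 1 \<le> k \<and> k \<le> n then mu_list n s ! k else 0) = snd s k"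
      using assms[of k] unfolding mu_list_def by (auto simp del: upt_Suc simp: nth_append)
  qed
  moreover have "mu_list n s ! 0 = fst s" unfolding mu_list_def by (simp del: upt_Suc)
  ultimately show ?thesis unfolding mu_unlist_def by (cases s) simp
qed

lemma is_path_Cons:
  assumes "ys \<noteq> []"
  shows "is_path N (u # ys) \<longleftrightarrow> u \<in> nodes N \<and> (u, hd ys) \<in> arcs N \<and> is_path N ys"
proof
  assume A: "is_path N (u # ys)"
  have "(u, hd ys) \<in> arcs N"
  proof -
    have "((u#ys) ! 0, (u#ys) ! Suc 0) \<in> arcs N" using A assms unfolding is_path_def by auto
    thus ?thesis using assms by (simp add: hd_conv_nth)
  qed
  moreover have "is_path N ys" unfolding is_path_def
  proof (intro conjI allI impI)
    show "set ys \<subseteq> nodes N" using A unfolding is_path_def by auto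
    fix k assume "Suc k < length ys"
    hence "((u#ys) ! Suc k, (u#ys) ! Suc (Suc k)) \<in> arcs N" using A unfolding is_path_def
      by auto
    thus "(ys ! k, ys ! Suc k) \<in> arcs N" by simp
  qed (rule assms)
  ultimately show "u \<in> nodes N \<and> (u, hd ys) \<in> arcs N \<and> is_path N ys" using A
    unfolding is_path_def by auto
next
  assume A: "u \<in> nodes N \<and> (u, hd ys) \<in> arcs N \<and> is_path N ys"
  show "is_path N (u # ys)" unfolding is_path_def
  proof (intro conjI allI impI)
    show "set (u # ys) \<subseteq> nodes N" using A unfolding is_path_def by auto
    fix k assume k: "Suc k < length (u # ys)"
    show "((u # ys) ! k, (u # ys) ! Suc k) \<in> arcs N"
    proof (cases k)
      case 0 thus ?thesis using A assms by (simp add: hd_conv_nth)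
    next
      case (Suc m) thus ?thesis using A k unfolding is_path_def by auto
    qed
  qed simp
qed

lemma is_path_single: "is_path N [u] \<longleftrightarrow> u \<in> nodes N"
  unfolding is_path_def by auto

lemma is_path_trancl:
  assumes "is_path N xs" "i < j" "j < length xs"
  shows "(xs ! i, xs ! j) \<in> (arcs N)\<^sup>+"
  using assms(2,3)
proof (induction j)
  case 0 thus ?case by simp
next
  case (Suc j)
  have a: "(xs ! j, xs ! Suc j) \<in> arcs N" using assms(1) Suc.prems unfolding is_path_def by auto
  show ?case
  proof (cases "i = j")
    case True thus ?thesis using a by auto
  next
    case False
    hence "(xs ! i, xs ! j) \<in> (arcs N)\<^sup>+" using Suc by auto
    thus ?thesis using a by auto
  qed
qed

lemma trancl_subset_trancl: "r \<subseteq> s\<^sup>+ \<Longrightarrow> r\<^sup>+ \<subseteq> s\<^sup>+"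
  by (metis trancl_mono_subset trancl_id trans_trancl)

lemma sum_insert_remove: assumes "finite S" "a \<in> S" "b \<notin> S" "f b = f a"
  shows "sum f (insert b (S - {a})) = sum f S"
proof -
  have "sum f (insert b (S - {a})) = f b + sum f (S - {a})" using assms by simp
  also have "\<dots> = sum f S" using assms by (simp add: sum.remove)
  finally show ?thesis .
qed

lemma map_prod_image_mem_iff:
  assumes "inj_on f A" "T \<subseteq> A \<times> A" "u \<in> A" "v \<in> A"
  shows "(f u, f v) \<in> map_prod f f ` T \<longleftrightarrow> (u, v) \<in> T"
proof
  assume "(f u, f v) \<in> map_prod f f ` T"
  then obtain a b where ab: "(a, b) \<in> T" "f u = f a" "f v = f b" by auto
  hence "u = a" "v = b" using assms unfolding inj_on_def by blast+
  thus "(u, v) \<in> T" using ab by simp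
qed force

lemma indeg_parents: "indeg N v = card (parents N v)" unfolding indeg_def parents_def ..
lemma outdeg_children: "outdeg N v = card (children N v)" unfolding outdeg_def children_def ..

section \<open>Path counts\<close>

locale phylo_net =
  fixes n :: nat and N :: "'a net"
  assumes P: "phylo_network n N"
begin

lemma finite_nodes: "finite (nodes N)" using P unfolding phylo_network_def by auto
lemma arcs_subset: "arcs N \<subseteq> nodes N \<times> nodes N" using P unfolding phylo_network_def
  by auto
lemma arc_tail: "(x,y) \<in> arcs N \<Longrightarrow> x \<in> nodes N" using arcs_subset by auto
lemma arc_head: "(x,y) \<in> arcs N \<Longrightarrow> y \<in> nodes N" using arcs_subset by auto
lemma finite_arcs: "finite (arcs N)" using finite_nodes arcs_subset finite_subset by blast
lemma acyclic_arcs: "acyclic (arcs N)" using P unfolding phylo_network_def by auto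
lemma wf_converse_arcs: "wf ((arcs N)\<inverse>)"
  using finite_arcs acyclic_arcs finite_acyclic_wf_converse by blast
lemma wf_arcs: "wf (arcs N)" using finite_arcs acyclic_arcs finite_acyclic_wf by blast
lemma no_self_loop: "(x,x) \<notin> arcs N" using acyclic_arcs unfolding acyclic_def by auto
lemma arc_not_reversible: "(x,y) \<in> arcs N \<Longrightarrow> (y,x) \<notin> (arcs N)\<^sup>*"
  using acyclic_arcs unfolding acyclic_def by (meson rtrancl_into_trancl2)

lemma children_subset: "children N x \<subseteq> nodes N" unfolding children_def using arc_head
  by auto
lemma parents_subset: "parents N x \<subseteq> nodes N" unfolding parents_def using arc_tail by auto
lemma finite_children: "finite (children N x)" using children_subset finite_nodes finite_subset
  by blast
lemma finite_parents: "finite (parents N x)" using parents_subset finite_nodes finite_subset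
  by blast

lemma node_cases: "x \<in> nodes N \<Longrightarrow> is_root N x \<or> is_leaf N x \<or> is_tree_node N x \<or> is_reticulation N x"
  using P unfolding phylo_network_def by auto

lemma ex1_root: "\<exists>!r. is_root N r" using P unfolding phylo_network_def by auto

definition root_node where "root_node = (THE r. is_root N r)"
lemma root_node_is_root: "is_root N root_node" unfolding root_node_def using ex1_root theI' by metis
lemma root_node_unique: "is_root N x \<Longrightarrow> x = root_node"
  using ex1_root root_node_is_root by blast

lemma leafD: assumes "is_leaf N x" shows "children N x = {}" "\<exists>p. parents N x = {p}"
proof -
  have c: "card (children N x) = 0" "card (parents N x) = 1" using assms
    unfolding is_leaf_def indeg_parents outdeg_children by auto
  show "children N x = {}" using c(1) finite_children card_0_eq by blast
  show "\<exists>p. parents N x = {p}"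
    using card_1_singleton_iff[THEN iffD1, OF c(2)[unfolded One_nat_def]] .
qed
lemma treeD: assumes "is_tree_node N x" shows "\<exists>a b. a \<noteq> b \<and> children N x = {a,b}" "\<exists>p. parents N x = {p}"
proof -
  have c: "card (children N x) = 2" "card (parents N x) = 1" using assms
    unfolding is_tree_node_def indeg_parents outdeg_children by auto
  show "\<exists>a b. a \<noteq> b \<and> children N x = {a,b}"
    using card_2_iff[THEN iffD1, OF c(1)] by blast
  show "\<exists>p. parents N x = {p}"
    using card_1_singleton_iff[THEN iffD1, OF c(2)[unfolded One_nat_def]] .
qed
lemma retD: assumes "is_reticulation N x" shows "\<exists>c. children N x = {c}" "\<exists>a b. a \<noteq> b \<and> parents N x = {a,b}"
proof -
  have c: "card (children N x) = 1" "card (parents N x) = 2" using assms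
    unfolding is_reticulation_def indeg_parents outdeg_children by auto
  show "\<exists>c. children N x = {c}"
    using card_1_singleton_iff[THEN iffD1, OF c(1)[unfolded One_nat_def]] .
  show "\<exists>a b. a \<noteq> b \<and> parents N x = {a,b}" using card_2_iff[THEN iffD1, OF c(2)]
    by blast
qed
lemma rootD: assumes "is_root N x" shows "\<exists>c. children N x = {c}" "parents N x = {}"
proof -
  have c: "card (children N x) = 1" "card (parents N x) = 0" using assms
    unfolding is_root_def indeg_parents outdeg_children by auto
  show "\<exists>c. children N x = {c}"
    using card_1_singleton_iff[THEN iffD1, OF c(1)[unfolded One_nat_def]] .
  show "parents N x = {}" using c(2) finite_parents card_0_eq by blast
qed

lemma path_set_outside: assumes "u \<notin> nodes N" shows "path_set N u v = {}"
proof -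
  { fix xs assume "xs \<in> path_set N u v" hence "is_path N xs" "hd xs = u" unfolding path_set_def
    by auto
    hence "u \<in> nodes N" unfolding is_path_def using hd_in_set by blast }
  thus ?thesis using assms by blast
qed

lemma path_set_trivial: "u \<in> nodes N \<Longrightarrow> path_set N u u = {[u]}"
proof -
  assume u: "u \<in> nodes N"
  { fix xs assume xs: "is_path N xs" "hd xs = u" "last xs = u"
    have "xs = [u]"
    proof (rule ccontr)
      assume "xs \<noteq> [u]"
      with xs have L: "length xs > 1" unfolding is_path_def
        by (metis One_nat_def Suc_lessI hd_Cons_tl length_0_conv length_Suc_conv length_greater_0_conv list.sel(3))
      hence "(xs ! 0, xs ! (length xs - 1)) \<in> (arcs N)\<^sup>+" using is_path_trancl[OF xs(1)]
        by auto
      moreover have "xs ! 0 = u" using xs L by (cases xs) auto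
      moreover have "xs ! (length xs - 1) = u" using xs L
        by (metis last_conv_nth list.size(3) not_less_zero)
      ultimately show False using acyclic_arcs unfolding acyclic_def by auto
    qed }
  thus ?thesis using u unfolding path_set_def by (auto simp: is_path_single)
qed

lemma path_set_step: assumes "u \<noteq> v"
  shows "path_set N u v = (\<Union>w\<in>children N u. (#) u ` path_set N w v)"
proof
  show "path_set N u v \<subseteq> (\<Union>w\<in>children N u. (#) u ` path_set N w v)"
  proof
    fix xs assume "xs \<in> path_set N u v"
    hence xs: "is_path N xs" "hd xs = u" "last xs = v" unfolding path_set_def by auto
    have "xs \<noteq> []" using xs(1) unfolding is_path_def by simp
    then obtain ys where ys: "xs = u # ys" using xs(2) by (cases xs) auto
    have ne: "ys \<noteq> []" using ys xs assms by auto
    have c: "u \<in> nodes N \<and> (u, hd ys) \<in> arcs N \<and> is_path N ys"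
      using is_path_Cons[OF ne] xs(1) ys by simp
    have "last ys = v" using xs ys ne by simp
    hence "ys \<in> path_set N (hd ys) v" "hd ys \<in> children N u" using c
      unfolding path_set_def children_def by auto
    thus "xs \<in> (\<Union>w\<in>children N u. (#) u ` path_set N w v)" using ys by blast
  qed
next
  show "(\<Union>w\<in>children N u. (#) u ` path_set N w v) \<subseteq> path_set N u v"
  proof
    fix xs assume "xs \<in> (\<Union>w\<in>children N u. (#) u ` path_set N w v)"
    then obtain w ys where w: "(u,w) \<in> arcs N" "ys \<in> path_set N w v" "xs = u # ys"
      unfolding children_def by auto
    have ys: "is_path N ys" "hd ys = w" "last ys = v" using w unfolding path_set_def by auto
    have ne: "ys \<noteq> []" using ys unfolding is_path_def by auto
    have u: "u \<in> nodes N" using arc_tail w(1) .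
    have "is_path N xs" unfolding w(3) is_path_Cons[OF ne] using u w(1) ys by simp
    moreover have "last xs = v" using ys ne w(3) by simp
    ultimately show "xs \<in> path_set N u v" using w(3) unfolding path_set_def by simp
  qed
qed

lemma finite_path_set: "finite (path_set N u v)"
proof (induction u rule: wf_induct[OF wf_converse_arcs])
  case (1 u)
  show ?case
  proof (cases "u \<in> nodes N")
    case False thus ?thesis by (simp add: path_set_outside)
  next
    case True
    show ?thesis
    proof (cases "u = v")
      case True with \<open>u \<in> nodes N\<close> show ?thesis by (simp add: path_set_trivial)
    next
      case False
      have "\<And>w. w\<in>children N u \<Longrightarrow> finite (path_set N w v)" using 1
        unfolding children_def by auto
      thus ?thesis unfolding path_set_step[OF False] using finite_children by blast
    qed
  qed
qed

lemma npaths_outside: "u \<notin> nodes N \<Longrightarrow> npaths N u v = 0"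
  unfolding npaths_def path_set_def[symmetric] by (simp add: path_set_outside)

lemma npaths_rec: assumes "u \<in> nodes N"
  shows "npaths N u v = (if u = v then 1 else (\<Sum>w\<in>children N u. npaths N w v))"
proof (cases "u = v")
  case True thus ?thesis using assms unfolding npaths_def path_set_def[symmetric]
    by (simp add: path_set_trivial)
next
  case False
  have "card (\<Union>w\<in>children N u. (#) u ` path_set N w v) = (\<Sum>w\<in>children N u. card ((#) u ` path_set N w v))"
  proof (rule card_UN_disjoint)
    show "\<forall>i\<in>children N u. \<forall>j\<in>children N u. i \<noteq> j \<longrightarrow> (#) u ` path_set N i v \<inter> (#) u ` path_set N j v = {}"
      unfolding path_set_def by auto
  qed (auto simp: finite_children finite_path_set)
  also have "\<dots> = (\<Sum>w\<in>children N u. npaths N w v)"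
    unfolding npaths_def path_set_def[symmetric] by (simp add: card_image)
  finally show ?thesis using False
    unfolding npaths_def path_set_def[symmetric] path_set_step[OF False] by simp
qed

lemma npaths_unique:
  assumes "\<And>x. x \<in> nodes N \<Longrightarrow> f x = (if x = y then 1 else (\<Sum>w\<in>children N x. f w))"
  shows "x \<in> nodes N \<Longrightarrow> f x = npaths N x y"
proof (induction x rule: wf_induct[OF wf_converse_arcs])
  case (1 x)
  show ?case
  proof (cases "x = y")
    case True thus ?thesis using assms 1 npaths_rec by simp
  next
    case False
    have "(\<Sum>w\<in>children N x. f w) = (\<Sum>w\<in>children N x. npaths N w y)"
    proof (rule sum.cong)
      fix w assume w: "w \<in> children N x"
      hence "w \<in> nodes N" "(w,x) \<in> (arcs N)\<inverse>" using children_subset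
        unfolding children_def by auto
      thus "f w = npaths N w y" using 1(1) by blast
    qed simp
    thus ?thesis using assms[OF 1(2)] npaths_rec[OF 1(2)] False by simp
  qed
qed

lemma npaths_subnet:
  assumes N1: "phylo_net n N1" and sub: "nodes N1 \<subseteq> nodes N"
    and y: "y \<in> nodes N1" and x: "x \<in> nodes N1"
    and same: "\<And>x. x \<in> nodes N1 \<Longrightarrow> x \<noteq> y \<Longrightarrow>
      (\<Sum>w\<in>children N1 x. npaths N w y) = (\<Sum>w\<in>children N x. npaths N w y)"
  shows "npaths N1 x y = npaths N x y"
proof -
  have "npaths N z y = (if z = y then 1 else (\<Sum>w\<in>children N1 z. npaths N w y))"
    if "z \<in> nodes N1" for z
    using npaths_rec[of z y] same[of z] sub that by auto
  from phylo_net.npaths_unique[OF N1 this x] show ?thesis by simp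
qed

lemma npaths_nonzero_rtrancl: "npaths N x y \<noteq> 0 \<Longrightarrow> (x, y) \<in> (arcs N)\<^sup>*"
proof (induction x rule: wf_induct[OF wf_converse_arcs])
  case (1 x)
  show ?case
  proof (cases "x \<in> nodes N")
    case False thus ?thesis using npaths_outside 1 by simp
  next
    case True
    show ?thesis
    proof (cases "x = y")
      case True thus ?thesis by simp
    next
      case False
      hence "(\<Sum>w\<in>children N x. npaths N w y) \<noteq> 0"
        using npaths_rec[OF \<open>x \<in> nodes N\<close>] 1(2) by simp
      then obtain w where w: "w \<in> children N x" "npaths N w y \<noteq> 0"
        by (rule sum.not_neutral_contains_not_neutral)
      hence a: "(x, w) \<in> arcs N" unfolding children_def by simp
      hence "(w, y) \<in> (arcs N)\<^sup>*" using 1(1) w(2) by auto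
      thus ?thesis using a by (meson converse_rtrancl_into_rtrancl)
    qed
  qed
qed

lemma npaths_pos: assumes "(x, y) \<in> (arcs N)\<^sup>*" "y \<in> nodes N" shows "npaths N x y \<ge> 1"
  using assms(1)
proof (induction rule: converse_rtrancl_induct)
  case base thus ?case using npaths_rec[OF assms(2)] by simp
next
  case (step x w)
  have x: "x \<in> nodes N" using step(1) arc_tail by blast
  show ?case
  proof (cases "x = y")
    case True thus ?thesis using npaths_rec[OF x] by simp
  next
    case False
    have "w \<in> children N x" using step(1) unfolding children_def by simp
    hence "npaths N w y \<le> (\<Sum>w\<in>children N x. npaths N w y)" using finite_children
      by (intro member_le_sum) auto
    thus ?thesis using npaths_rec[OF x] False step(3) by simp
  qed
qed

lemma npaths_arc_back: assumes "(y, x) \<in> arcs N" shows "npaths N x y = 0"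
proof (rule ccontr)
  assume "npaths N x y \<noteq> 0"
  hence "(x, y) \<in> (arcs N)\<^sup>*" using npaths_nonzero_rtrancl by auto
  thus False using arc_not_reversible assms by auto
qed

lemma npaths_from_leaf: assumes "is_leaf N x" shows "npaths N x y = (if x = y then 1 else 0)"
proof -
  have "x \<in> nodes N" using assms unfolding is_leaf_def by simp
  thus ?thesis using npaths_rec leafD(1)[OF assms] by simp
qed

lemma npaths_rec_sum: assumes "x \<in> nodes N"
  shows "npaths N x y = (if x = y then 1 else 0) + (\<Sum>w\<in>children N x. npaths N w y)"
proof (cases "x = y")
  case True
  have "\<And>w. w \<in> children N x \<Longrightarrow> npaths N w y = 0"
  proof -
    fix w assume w: "w \<in> children N x"
    show "npaths N w y = 0"
    proof (rule ccontr)
      assume "npaths N w y \<noteq> 0"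
      hence "(w, y) \<in> (arcs N)\<^sup>*" using npaths_nonzero_rtrancl by auto
      thus False using arc_not_reversible w True unfolding children_def by auto
    qed
  qed
  thus ?thesis using npaths_rec[OF assms] True by simp
next
  case False thus ?thesis using npaths_rec[OF assms] by simp
qed

lemma npaths_sum_rec: assumes "x \<in> nodes N" "finite T"
  shows "(\<Sum>y\<in>T. npaths N x y) = (if x \<in> T then 1 else 0) + (\<Sum>w\<in>children N x. \<Sum>y\<in>T. npaths N w y)"
proof -
  have "(\<Sum>y\<in>T. npaths N x y) = (\<Sum>y\<in>T. (if x = y then 1 else 0) + (\<Sum>w\<in>children N x. npaths N w y))"
    using npaths_rec_sum[OF assms(1)] by simp
  also have "\<dots> = (\<Sum>y\<in>T. (if x = y then 1 else 0)) + (\<Sum>y\<in>T. \<Sum>w\<in>children N x. npaths N w y)"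
    by (rule sum.distrib)
  also have "(\<Sum>y\<in>T. (if x = y then 1 else 0)) = (if x \<in> T then 1 else (0::nat))"
    using assms(2) by (simp add: sum.delta)
  also have "(\<Sum>y\<in>T. \<Sum>w\<in>children N x. npaths N w y) = (\<Sum>w\<in>children N x. \<Sum>y\<in>T. npaths N w y)"
    by (rule sum.swap)
  finally show ?thesis .
qed

lemma npaths_rec_parents: assumes y: "y \<in> nodes N"
  shows "npaths N x y = (if x = y then 1 else 0) + (\<Sum>p\<in>parents N y. npaths N x p)"
proof (cases "x \<in> nodes N")
  case False
  thus ?thesis using y npaths_outside by auto
next
  case True
  define f where "f z = (if z = y then 1 else 0) + (\<Sum>p\<in>parents N y. npaths N z p)" for z
  have "f z = (if z = y then 1 else (\<Sum>w\<in>children N z. f w))" if z: "z \<in> nodes N" for z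
  proof (cases "z = y")
    case True
    thus ?thesis using npaths_arc_back unfolding f_def parents_def by simp
  next
    case False
    have "(\<Sum>w\<in>children N z. f w) =
        (if y \<in> children N z then 1 else 0) + (\<Sum>w\<in>children N z. \<Sum>p\<in>parents N y. npaths N w p)"
      unfolding f_def sum.distrib using finite_children by (simp add: sum.delta')
    also have "\<dots> = (\<Sum>p\<in>parents N y. npaths N z p)"
      using npaths_sum_rec[OF z finite_parents] unfolding children_def parents_def by simp
    finally show ?thesis using False unfolding f_def by simp
  qed
  from npaths_unique[OF this True] show ?thesis unfolding f_def by simp
qed

lemma npaths_one_parent: assumes "y \<in> nodes N" "parents N y = {p}" "x \<noteq> y" shows "npaths N x y = npaths N x p"
  using npaths_rec_parents[OF assms(1), of x] assms by simp

lemma npaths_two_parents: assumes "y \<in> nodes N" "parents N y = {p,q}" "p \<noteq> q" "x \<noteq> y"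
  shows "npaths N x y = npaths N x p + npaths N x q"
  using npaths_rec_parents[OF assms(1), of x] assms by simp

lemma nonroot_has_parent: assumes "x \<in> nodes N" "\<not> is_root N x" shows "\<exists>p. (p, x) \<in> arcs N"
proof -
  have "is_leaf N x \<or> is_tree_node N x \<or> is_reticulation N x"
    using node_cases[OF assms(1)] assms(2) by auto
  hence "parents N x \<noteq> {}" using leafD(2) treeD(2) retD(2) by fastforce
  thus ?thesis unfolding parents_def by auto
qed

lemma nonleaf_has_child: assumes "x \<in> nodes N" "\<not> is_leaf N x" shows "\<exists>w. (x, w) \<in> arcs N"
proof -
  have "is_root N x \<or> is_tree_node N x \<or> is_reticulation N x"
    using node_cases[OF assms(1)] assms(2) by auto
  hence "children N x \<noteq> {}" using rootD(1) treeD(1) retD(1) by fastforce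
  thus ?thesis unfolding children_def by auto
qed

lemma root_reaches: "x \<in> nodes N \<Longrightarrow> (root_node, x) \<in> (arcs N)\<^sup>*"
proof (induction x rule: wf_induct[OF wf_arcs])
  case (1 x)
  show ?case
  proof (cases "is_root N x")
    case True thus ?thesis using root_node_unique by simp
  next
    case False
    then obtain p where p: "(p, x) \<in> arcs N" using nonroot_has_parent 1(2) by blast
    hence "(root_node, p) \<in> (arcs N)\<^sup>*" using 1(1) arc_tail by blast
    thus ?thesis using p by simp
  qed
qed

lemma root_child_not_reticulation: assumes "(root_node, c) \<in> arcs N" shows "\<not> is_reticulation N c"
proof
  assume r: "is_reticulation N c"
  obtain a b where ab: "a \<noteq> b" "parents N c = {a,b}" using retD(2)[OF r] by blast
  obtain p where p: "p \<in> parents N c" "p \<noteq> root_node" using ab by blast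
  obtain d where d: "children N root_node = {d}" using rootD(1)[OF root_node_is_root] by blast
  have pc: "(p, c) \<in> arcs N" using p unfolding parents_def by simp
  have "(root_node, p) \<in> (arcs N)\<^sup>*" using root_reaches arc_tail[OF pc] by blast
  then obtain z where z: "(root_node, z) \<in> arcs N" "(z, p) \<in> (arcs N)\<^sup>*" using p(2)
    by (metis converse_rtranclE)
  have "z \<in> children N root_node" "c \<in> children N root_node" using z(1) assms
    unfolding children_def by auto
  hence "z = c" using d by simp
  thus False using z(2) arc_not_reversible pc by simp
qed

lemma reticulation_has_tree_ancestor: "is_reticulation N x \<Longrightarrow> \<exists>t. is_tree_node N t \<and> (t, x) \<in> (arcs N)\<^sup>+"
proof (induction x rule: wf_induct[OF wf_arcs])
  case (1 x)
  obtain a b where ab: "a \<noteq> b" "parents N x = {a,b}" using retD(2)[OF 1(2)] by blast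
  obtain p where p: "p \<in> parents N x" "p \<noteq> root_node" using ab by blast
  have px: "(p, x) \<in> arcs N" using p unfolding parents_def by simp
  have phylo_net: "p \<in> nodes N" using arc_tail[OF px] .
  have "\<not> is_leaf N p" using leafD(1) px unfolding children_def by blast
  moreover have "\<not> is_root N p" using root_node_unique p(2) by blast
  ultimately have "is_tree_node N p \<or> is_reticulation N p" using node_cases[OF phylo_net]
    by blast
  thus ?case
  proof
    assume "is_tree_node N p" thus ?thesis using px by blast
  next
    assume "is_reticulation N p"
    then obtain t where "is_tree_node N t" "(t, p) \<in> (arcs N)\<^sup>+" using 1(1) px by blast
    thus ?thesis using px by (meson trancl_into_trancl)
  qed
qed

lemma leaf_set_iff: "x \<in> leaf_set N \<longleftrightarrow> is_leaf N x"
  unfolding leaf_set_def is_leaf_def by auto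
lemma ret_set_iff: "x \<in> ret_set N \<longleftrightarrow> is_reticulation N x"
  unfolding ret_set_def is_reticulation_def by auto
lemma finite_leaf_set: "finite (leaf_set N)" using finite_nodes unfolding leaf_set_def by simp
lemma finite_ret_set: "finite (ret_set N)" using finite_nodes unfolding ret_set_def by simp
lemma finite_VT: "finite (VT N)" using finite_nodes unfolding VT_def by simp
lemma inj_on_lab: "inj_on (lab N) (leaf_set N)" using P unfolding phylo_network_def by simp
lemma labels_subset: "labels N \<subseteq> {1..n}" using P unfolding phylo_network_def by simp

lemma leaf_node_spec: assumes "k \<in> labels N" shows "leaf_node N k \<in> leaf_set N" "lab N (leaf_node N k) = k"
proof -
  obtain l where l: "l \<in> leaf_set N" "lab N l = k" using assms unfolding labels_def by auto
  have u: "\<And>v. v \<in> leaf_set N \<and> lab N v = k \<Longrightarrow> v = l"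
    using inj_on_lab l unfolding inj_on_def by blast
  have "leaf_node N k = l" unfolding leaf_node_def using l u by blast
  thus "leaf_node N k \<in> leaf_set N" "lab N (leaf_node N k) = k" using l by auto
qed

lemma leaf_node_lab: assumes "l \<in> leaf_set N" shows "leaf_node N (lab N l) = l"
proof -
  have k: "lab N l \<in> labels N" using assms unfolding labels_def by simp
  show ?thesis using leaf_node_spec[OF k] inj_on_lab assms unfolding inj_on_def by blast
qed

lemma mu_leaf_support: "mu_leaf N x k \<noteq> 0 \<Longrightarrow> 1 \<le> k \<and> k \<le> n"
  using labels_subset unfolding mu_leaf_def by (auto split: if_splits)

lemma leaf_paths_labels: "leaf_paths N x = (\<Sum>k\<in>labels N. mu_leaf N x k)"
proof -
  have "(\<Sum>k\<in>labels N. mu_leaf N x k) = (\<Sum>l\<in>leaf_set N. mu_leaf N x (lab N l))"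
    unfolding labels_def by (simp add: sum.reindex[OF inj_on_lab] comp_def)
  also have "\<dots> = (\<Sum>l\<in>leaf_set N. npaths N x l)"
  proof (rule sum.cong)
    fix l assume l: "l \<in> leaf_set N"
    have "lab N l \<in> labels N" using l unfolding labels_def by simp
    thus "mu_leaf N x (lab N l) = npaths N x l" unfolding mu_leaf_def using leaf_node_lab[OF l]
      by simp
  qed simp
  finally show ?thesis unfolding leaf_paths_def by simp
qed

lemma leaf_paths_eq_sum: "leaf_paths N x = (\<Sum>k\<in>{1..n}. mu_leaf N x k)"
proof -
  have "(\<Sum>k\<in>labels N. mu_leaf N x k) = (\<Sum>k\<in>{1..n}. mu_leaf N x k)"
    by (rule sum.mono_neutral_left) (use labels_subset in \<open>auto simp: mu_leaf_def\<close>)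
  thus ?thesis using leaf_paths_labels by simp
qed

lemma leaf_paths_rec: assumes "x \<in> nodes N"
  shows "leaf_paths N x = (if is_leaf N x then 1 else 0) + (\<Sum>w\<in>children N x. leaf_paths N w)"
  unfolding leaf_paths_def using npaths_sum_rec[OF assms finite_leaf_set] leaf_set_iff by simp

lemma mu_ret_rec: assumes "x \<in> nodes N"
  shows "mu_ret N x = (if is_reticulation N x then 1 else 0) + (\<Sum>w\<in>children N x. mu_ret N w)"
  unfolding mu_ret_def using npaths_sum_rec[OF assms finite_ret_set] ret_set_iff by simp

lemma leaf_paths_pos: "x \<in> nodes N \<Longrightarrow> leaf_paths N x \<ge> 1"
proof (induction x rule: wf_induct[OF wf_converse_arcs])
  case (1 x)
  show ?case
  proof (cases "is_leaf N x")
    case True thus ?thesis using leaf_paths_rec[OF 1(2)] by simp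
  next
    case False
    then obtain w where w: "(x, w) \<in> arcs N" using nonleaf_has_child 1(2) by blast
    have "leaf_paths N w \<ge> 1" using 1(1) w arc_head by blast
    moreover have "leaf_paths N w \<le> (\<Sum>w\<in>children N x. leaf_paths N w)"
      using w finite_children unfolding children_def
      by (intro member_le_sum) auto
    ultimately show ?thesis using leaf_paths_rec[OF 1(2)] by simp
  qed
qed

lemma leaf_paths_leaf: "is_leaf N x \<Longrightarrow> leaf_paths N x = 1"
  using leaf_paths_rec leafD(1) unfolding is_leaf_def by simp
lemma mu_ret_leaf: "is_leaf N x \<Longrightarrow> mu_ret N x = 0"
  using mu_ret_rec leafD(1) unfolding is_leaf_def is_reticulation_def by simp

lemma leaf_paths_tree: assumes "is_tree_node N x" shows "leaf_paths N x \<ge> 2"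
proof -
  obtain a b where ab: "a \<noteq> b" "children N x = {a,b}" using treeD(1)[OF assms] by blast
  have "a \<in> nodes N" "b \<in> nodes N" using ab children_subset by auto
  hence "leaf_paths N a \<ge> 1" "leaf_paths N b \<ge> 1" using leaf_paths_pos by auto
  moreover have "\<not> is_leaf N x" using assms unfolding is_leaf_def is_tree_node_def by simp
  ultimately show ?thesis using leaf_paths_rec[of x] ab assms unfolding is_tree_node_def by simp
qed

lemma mu_leaf_of_leaf: assumes "is_leaf N x" shows "mu_leaf N x k = (if k = lab N x then 1 else 0)"
proof -
  have xl: "x \<in> leaf_set N" using assms leaf_set_iff by simp
  show ?thesis
  proof (cases "k = lab N x")
    case True
    hence "k \<in> labels N" using xl unfolding labels_def by simp
    thus ?thesis using True leaf_node_lab[OF xl] npaths_from_leaf[OF assms] unfolding mu_leaf_def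
      by simp
  next
    case False
    { assume k: "k \<in> labels N"
      hence "leaf_node N k \<noteq> x" using leaf_node_spec(2)[OF k] False by auto }
    thus ?thesis using False npaths_from_leaf[OF assms] unfolding mu_leaf_def by auto
  qed
qed
end

section \<open>Invariance under isomorphism\<close>

locale phylo_iso = A: phylo_net n N + B: phylo_net n N' for n and N :: "'a net" and N' :: "'b net" +
  fixes f :: "'a \<Rightarrow> 'b"
  assumes iso_bij: "bij_betw f (nodes N) (nodes N')"
    and iso_arcs: "\<And>u v. u \<in> nodes N \<Longrightarrow> v \<in> nodes N \<Longrightarrow> (u, v) \<in> arcs N \<longleftrightarrow> (f u, f v) \<in> arcs N'"
    and iso_lab: "\<And>v. v \<in> leaf_set N \<Longrightarrow> lab N' (f v) = lab N v"
begin

lemma iso_inj: "inj_on f (nodes N)" using bij_betw_imp_inj_on[OF iso_bij] .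
lemma iso_image: "f ` nodes N = nodes N'" using bij_betw_imp_surj_on[OF iso_bij] .
lemma iso_node: "x \<in> nodes N \<Longrightarrow> f x \<in> nodes N'" using iso_image by blast
lemma iso_surj: "y \<in> nodes N' \<Longrightarrow> \<exists>x\<in>nodes N. y = f x" using iso_image
  by blast

lemma children_iso: assumes "x \<in> nodes N" shows "children N' (f x) = f ` children N x"
proof
  show "children N' (f x) \<subseteq> f ` children N x"
  proof
    fix y assume y: "y \<in> children N' (f x)"
    then obtain w where w: "w \<in> nodes N" "y = f w" using iso_surj B.children_subset by blast
    have "(x, w) \<in> arcs N" using iso_arcs[OF assms w(1)] y w(2) unfolding children_def by simp
    thus "y \<in> f ` children N x" using w unfolding children_def by simp
  qed
next
  show "f ` children N x \<subseteq> children N' (f x)"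
  proof
    fix y assume "y \<in> f ` children N x"
    then obtain w where w: "(x, w) \<in> arcs N" "y = f w" unfolding children_def by auto
    have "w \<in> nodes N" using A.arc_head[OF w(1)] .
    thus "y \<in> children N' (f x)" using iso_arcs[OF assms] w unfolding children_def by simp
  qed
qed

lemma parents_iso: assumes "x \<in> nodes N" shows "parents N' (f x) = f ` parents N x"
proof
  show "parents N' (f x) \<subseteq> f ` parents N x"
  proof
    fix y assume y: "y \<in> parents N' (f x)"
    then obtain w where w: "w \<in> nodes N" "y = f w" using iso_surj B.parents_subset by blast
    have "(w, x) \<in> arcs N" using iso_arcs[OF w(1) assms] y w(2) unfolding parents_def by simp
    thus "y \<in> f ` parents N x" using w unfolding parents_def by simp
  qed
next
  show "f ` parents N x \<subseteq> parents N' (f x)"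
  proof
    fix y assume "y \<in> f ` parents N x"
    then obtain w where w: "(w, x) \<in> arcs N" "y = f w" unfolding parents_def by auto
    have "w \<in> nodes N" using A.arc_tail[OF w(1)] .
    thus "y \<in> parents N' (f x)" using iso_arcs[OF _ assms] w unfolding parents_def by simp
  qed
qed

lemma card_iso: "S \<subseteq> nodes N \<Longrightarrow> card (f ` S) = card S"
  using iso_inj inj_on_subset card_image by metis

lemma indeg_iso: "x \<in> nodes N \<Longrightarrow> indeg N' (f x) = indeg N x"
  unfolding indeg_parents using parents_iso card_iso A.parents_subset by simp
lemma outdeg_iso: "x \<in> nodes N \<Longrightarrow> outdeg N' (f x) = outdeg N x"
  unfolding outdeg_children using children_iso card_iso A.children_subset by simp

lemma is_leaf_iso: "x \<in> nodes N \<Longrightarrow> is_leaf N' (f x) \<longleftrightarrow> is_leaf N x"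
  unfolding is_leaf_def using indeg_iso outdeg_iso iso_node by simp
lemma is_tree_node_iso: "x \<in> nodes N \<Longrightarrow> is_tree_node N' (f x) \<longleftrightarrow> is_tree_node N x"
  unfolding is_tree_node_def using indeg_iso outdeg_iso iso_node by simp
lemma is_reticulation_iso: "x \<in> nodes N \<Longrightarrow> is_reticulation N' (f x) \<longleftrightarrow> is_reticulation N x"
  unfolding is_reticulation_def using indeg_iso outdeg_iso iso_node by simp

lemma node_set_iso: assumes "\<And>x. x \<in> nodes N \<Longrightarrow> Q' (f x) \<longleftrightarrow> Q x"
  shows "{v \<in> nodes N'. Q' v} = f ` {v \<in> nodes N. Q v}"
proof
  show "{v \<in> nodes N'. Q' v} \<subseteq> f ` {v \<in> nodes N. Q v}"
  proof
    fix y assume "y \<in> {v \<in> nodes N'. Q' v}"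
    then obtain x where "x \<in> nodes N" "y = f x" "Q' y" using iso_surj by blast
    thus "y \<in> f ` {v \<in> nodes N. Q v}" using assms by blast
  qed
qed (use assms iso_node in auto)

lemma leaf_set_iso: "leaf_set N' = f ` leaf_set N"
  unfolding leaf_set_def by (rule node_set_iso) (rule is_leaf_iso)
lemma ret_set_iso: "ret_set N' = f ` ret_set N"
  unfolding ret_set_def by (rule node_set_iso) (rule is_reticulation_iso)
lemma VT_iso: "VT N' = f ` VT N"
  unfolding VT_def by (rule node_set_iso) (use is_leaf_iso is_tree_node_iso in blast)

lemma labels_iso: "labels N' = labels N"
  unfolding labels_def leaf_set_iso using iso_lab by (auto simp: image_image)

lemma leaf_node_iso: assumes "k \<in> labels N" shows "leaf_node N' k = f (leaf_node N k)"
proof -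
  have l: "leaf_node N k \<in> leaf_set N" "lab N (leaf_node N k) = k"
    using A.leaf_node_spec[OF assms] by auto
  have "f (leaf_node N k) \<in> leaf_set N'" using l leaf_set_iso by blast
  moreover have "lab N' (f (leaf_node N k)) = k" using iso_lab l by simp
  ultimately show ?thesis using B.leaf_node_lab by metis
qed

lemma npaths_iso: assumes "x \<in> nodes N" "y \<in> nodes N" shows "npaths N' (f x) (f y) = npaths N x y"
proof -
  have "\<And>x. x \<in> nodes N \<Longrightarrow> npaths N' (f x) (f y) = (if x = y then 1 else (\<Sum>w\<in>children N x. npaths N' (f w) (f y)))"
  proof -
    fix x assume x: "x \<in> nodes N"
    have e: "f x = f y \<longleftrightarrow> x = y" using iso_inj x assms(2) unfolding inj_on_def
      by blast
    have "(\<Sum>w\<in>children N' (f x). npaths N' w (f y)) = (\<Sum>w\<in>children N x. npaths N' (f w) (f y))"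
    proof -
      have "inj_on f (children N x)" using inj_on_subset[OF iso_inj A.children_subset] .
      thus ?thesis unfolding children_iso[OF x] by (simp add: sum.reindex comp_def)
    qed
    thus "npaths N' (f x) (f y) = (if x = y then 1 else (\<Sum>w\<in>children N x. npaths N' (f w) (f y)))"
      using B.npaths_rec[OF iso_node[OF x]] e by simp
  qed
  from A.npaths_unique[OF this assms(1)] show ?thesis .
qed

lemma mu_ret_iso: assumes "x \<in> nodes N" shows "mu_ret N' (f x) = mu_ret N x"
proof -
  have "mu_ret N' (f x) = (\<Sum>h\<in>ret_set N. npaths N' (f x) (f h))"
    unfolding mu_ret_def ret_set_iso using iso_inj inj_on_subset[of f "nodes N" "ret_set N"]
    by (subst sum.reindex) (auto simp: comp_def ret_set_def)
  also have "\<dots> = mu_ret N x" unfolding mu_ret_def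
    by (rule sum.cong) (auto simp: npaths_iso assms ret_set_def)
  finally show ?thesis .
qed

lemma mu_leaf_iso: assumes "x \<in> nodes N" shows "mu_leaf N' (f x) = mu_leaf N x"
proof
  fix k show "mu_leaf N' (f x) k = mu_leaf N x k"
  proof (cases "k \<in> labels N")
    case True
    have "leaf_node N k \<in> nodes N" using A.leaf_node_spec(1)[OF True] unfolding leaf_set_def
      by simp
    thus ?thesis unfolding mu_leaf_def labels_iso using True leaf_node_iso npaths_iso assms by simp
  qed (simp add: mu_leaf_def labels_iso)
qed

lemma mu_profile_iso: "mu_profile N' = mu_profile N"
proof -
  have "VT N \<subseteq> nodes N" unfolding VT_def by auto
  hence i: "inj_on f (VT N)" using iso_inj inj_on_subset by blast
  have "mu_profile N' = image_mset (mu_pair N' \<circ> f) (mset_set (VT N))"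
    unfolding mu_profile_def VT_iso image_mset_mset_set[OF i, symmetric]
      by (simp add: multiset.map_comp)
  also have "\<dots> = mu_profile N" unfolding mu_profile_def
    by (rule image_mset_cong) (use \<open>VT N \<subseteq> nodes N\<close> in \<open>auto simp: mu_pair_def mu_ret_iso mu_leaf_iso A.finite_VT\<close>)
  finally show ?thesis .
qed

end

lemma phylo_iso_of_net_iso:
  assumes "phylo_net n N" "phylo_net n N'" "net_iso N N'"
  obtains f where "phylo_iso n N N' f"
  using assms unfolding net_iso_def by (metis phylo_iso.intro phylo_iso_axioms.intro)

lemma mu_profile_eq_if_net_iso:
  assumes "phylo_net n N" "phylo_net n N'" "net_iso N N'"
  shows "mu_profile N = mu_profile N'"
  using phylo_iso_of_net_iso[OF assms] phylo_iso.mu_profile_iso by metis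

section \<open>Reducing a cherry\<close>

context phylo_net begin

lemma degree_preserving_subnet:
  assumes lab1: "lab N1 = lab N"
    and nodes1: "nodes N1 \<subseteq> nodes N"
    and arcs1: "arcs N1 \<subseteq> nodes N1 \<times> nodes N1"
    and A1: "arcs N1 \<subseteq> (arcs N)\<^sup>+"
    and dg: "\<And>x. x \<in> nodes N1 \<Longrightarrow>
      card (parents N1 x) = card (parents N x) \<and> card (children N1 x) = card (children N x)"
    and r1: "root_node \<in> nodes N1"
  shows "phylo_network n N1"
    and il: "\<And>x. x \<in> nodes N1 \<Longrightarrow> is_leaf N1 x \<longleftrightarrow> is_leaf N x"
    and it: "\<And>x. x \<in> nodes N1 \<Longrightarrow> is_tree_node N1 x \<longleftrightarrow> is_tree_node N x"
    and ih: "\<And>x. x \<in> nodes N1 \<Longrightarrow> is_reticulation N1 x \<longleftrightarrow> is_reticulation N x"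
    and ir: "\<And>x. x \<in> nodes N1 \<Longrightarrow> is_root N1 x \<longleftrightarrow> is_root N x"
proof -
  show il: "\<And>x. x \<in> nodes N1 \<Longrightarrow> is_leaf N1 x \<longleftrightarrow> is_leaf N x"
    and it: "\<And>x. x \<in> nodes N1 \<Longrightarrow> is_tree_node N1 x \<longleftrightarrow> is_tree_node N x"
    and ih: "\<And>x. x \<in> nodes N1 \<Longrightarrow> is_reticulation N1 x \<longleftrightarrow> is_reticulation N x"
    and ir: "\<And>x. x \<in> nodes N1 \<Longrightarrow> is_root N1 x \<longleftrightarrow> is_root N x"
    unfolding is_leaf_def is_tree_node_def is_reticulation_def is_root_def indeg_parents outdeg_children
    using dg nodes1 by auto
  have fin: "finite (nodes N1)" using finite_nodes nodes1 finite_subset by blast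
  have ac: "acyclic (arcs N1)"
  proof -
    have "(arcs N1)\<^sup>+ \<subseteq> (arcs N)\<^sup>+" using trancl_subset_trancl[OF A1] .
    thus ?thesis using acyclic_arcs unfolding acyclic_def by blast
  qed
  have root: "\<exists>!r. is_root N1 r"
  proof
    show "is_root N1 root_node" using ir[OF r1] root_node_is_root by simp
  next
    fix r assume "is_root N1 r"
    moreover hence "r \<in> nodes N1" unfolding is_root_def by simp
    ultimately show "r = root_node" using ir root_node_unique by blast
  qed
  have cl: "\<forall>v\<in>nodes N1. is_root N1 v \<or> is_leaf N1 v \<or> is_tree_node N1 v \<or> is_reticulation N1 v"
    using node_cases ir il it ih nodes1 by blast
  have ls: "leaf_set N1 \<subseteq> leaf_set N" unfolding leaf_set_def using il nodes1 by auto
  have inj1: "inj_on (lab N1) (leaf_set N1)" using inj_on_lab ls lab1 inj_on_subset by metis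
  have "labels N1 \<subseteq> labels N" unfolding labels_def lab1 using ls by auto
  hence lb: "labels N1 \<subseteq> {1..n}" using labels_subset by blast
  show "phylo_network n N1" unfolding phylo_network_def using fin arcs1 ac root cl inj1 lb by blast
qed

lemma not_tree_leaf: "is_leaf N x \<Longrightarrow> \<not> is_tree_node N x"
  unfolding is_leaf_def is_tree_node_def by simp
lemma not_leaf_tree: "is_tree_node N x \<Longrightarrow> \<not> is_leaf N x"
  unfolding is_leaf_def is_tree_node_def by simp
lemma not_leaf_reticulation: "is_reticulation N x \<Longrightarrow> \<not> is_leaf N x"
  unfolding is_leaf_def is_reticulation_def by simp

lemma parent_eq_singleton: "parents N x = {p} \<Longrightarrow> parent N x = p"
  unfolding parent_def parents_def by (rule the_equality) auto

end

definition cut_cherry :: "'a net \<Rightarrow> 'a \<Rightarrow> 'a \<Rightarrow> 'a \<Rightarrow> 'a \<Rightarrow> 'a net" where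
  "cut_cherry N li lj p g = N\<lparr>nodes := nodes N - {li, p}, arcs := (arcs N - {(g,p),(p,li),(p,lj)}) \<union> {(g,lj)}\<rparr>"

definition label_ind :: "nat \<Rightarrow> nat \<Rightarrow> nat" where "label_ind i = (\<lambda>k. if k = i then 1 else 0)"
definition label_ind2 :: "nat \<Rightarrow> nat \<Rightarrow> nat \<Rightarrow> nat" where "label_ind2 i j = (\<lambda>k. if k = i \<or> k = j then 1 else 0)"

definition forget_label :: "nat \<Rightarrow> nat \<times> (nat \<Rightarrow> nat) \<Rightarrow> nat \<times> (nat \<Rightarrow> nat)" where
  "forget_label k s = (fst s, (snd s)(k := 0))"

locale cherry_at = phylo_net +
  fixes i j :: nat and li lj p g :: 'a
  assumes ij: "i \<noteq> j"
  and li: "li = leaf_node N i" and lj: "lj = leaf_node N j"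
  and il: "i \<in> labels N" and jl: "j \<in> labels N"
  and pli: "parents N li = {p}" and plj: "parents N lj = {p}"
  and chp: "children N p = {li, lj}" and pp: "parents N p = {g}"
begin

lemma li_leaf: "li \<in> leaf_set N" "lab N li = i" using leaf_node_spec[OF il] li by auto
lemma lj_leaf: "lj \<in> leaf_set N" "lab N lj = j" using leaf_node_spec[OF jl] lj by auto
lemma leaf_li: "is_leaf N li" using li_leaf leaf_set_iff by auto
lemma leaf_lj: "is_leaf N lj" using lj_leaf leaf_set_iff by auto
lemma li_neq_lj: "li \<noteq> lj" using li_leaf lj_leaf ij by auto
lemma arc_into_p: "(u, p) \<in> arcs N \<longleftrightarrow> u = g" using pp unfolding parents_def
  by auto
lemma arc_from_p: "(p, w) \<in> arcs N \<longleftrightarrow> w = li \<or> w = lj" using chp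
  unfolding children_def by auto
lemma arc_into_li: "(u, li) \<in> arcs N \<longleftrightarrow> u = p" using pli
  unfolding parents_def by auto
lemma arc_into_lj: "(u, lj) \<in> arcs N \<longleftrightarrow> u = p" using plj
  unfolding parents_def by auto
lemma no_arc_from_li: "(li, w) \<notin> arcs N" using leafD(1)[OF leaf_li] unfolding children_def
  by auto
lemma no_arc_from_lj: "(lj, w) \<notin> arcs N" using leafD(1)[OF leaf_lj] unfolding children_def
  by auto
lemma p_node: "p \<in> nodes N" using arc_tail arc_from_p by blast
lemma g_node: "g \<in> nodes N" using arc_tail arc_into_p by blast
lemma li_node: "li \<in> nodes N" using arc_head arc_from_p by blast
lemma lj_node: "lj \<in> nodes N" using arc_head arc_from_p by blast
lemma g_neq_p: "g \<noteq> p" using no_self_loop arc_into_p by blast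
lemma p_neq_leaves: "p \<noteq> li" "p \<noteq> lj" using no_arc_from_li no_arc_from_lj arc_from_p
  by blast+
lemma g_neq_leaves: "g \<noteq> li" "g \<noteq> lj" using no_arc_from_li no_arc_from_lj arc_into_p
  by blast+
lemma tree_node_p: "is_tree_node N p"
  unfolding is_tree_node_def indeg_parents outdeg_children using p_node chp pp li_neq_lj by simp

lemma reduce_eq: "reduce N (i, j) = cut_cherry N li lj p g"
proof -
  have "is_cherry N (i, j)" unfolding is_cherry_def
    using ij il jl parent_eq_singleton[OF pli] parent_eq_singleton[OF plj] li lj by simp
  moreover have "{(u, w) |u w. (u, p) \<in> arcs N - {(p, li)} \<and> (p, w) \<in> arcs N - {(p, li)}} = {(g, lj)}"
    using arc_into_p arc_from_p li_neq_lj p_neq_leaves g_neq_p by auto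
  moreover have "{e \<in> arcs N - {(p, li)}. fst e \<noteq> p \<and> snd e \<noteq> p} = arcs N - {(g,p),(p,li),(p,lj)}"
    using arc_from_p arc_into_p by fastforce
  moreover have "nodes N - {li} - {p} = nodes N - {li, p}" by auto
  ultimately show ?thesis unfolding reduce_def cut_cherry_def suppress_def Let_def
    using li[symmetric] lj[symmetric] parent_eq_singleton[OF pli] parent_eq_singleton[OF plj]
      by simp
qed

abbreviation "N1 \<equiv> cut_cherry N li lj p g"

lemma N1_simps: "nodes N1 = nodes N - {li, p}" "arcs N1 = (arcs N - {(g,p),(p,li),(p,lj)}) \<union> {(g,lj)}"
  "lab N1 = lab N"
  unfolding cut_cherry_def by simp_all

lemma children_N1: assumes "x \<in> nodes N1" shows "children N1 x = (if x = g then insert lj (children N x - {p}) else children N x)"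
  using assms unfolding children_def N1_simps using arc_from_p by auto

lemma parents_N1: assumes "x \<in> nodes N1" shows "parents N1 x = (if x = lj then {g} else parents N x)"
  using assms unfolding parents_def N1_simps using arc_into_p arc_into_li arc_into_lj by auto

lemma children_g: "lj \<notin> children N g" "p \<in> children N g"
  using arc_into_lj g_neq_p arc_into_p unfolding children_def by auto

lemma N1_nodes: "g \<in> nodes N1" "lj \<in> nodes N1" "root_node \<in> nodes N1"
proof -
  show "g \<in> nodes N1" using g_node g_neq_leaves g_neq_p unfolding N1_simps by auto
  show "lj \<in> nodes N1" using lj_node li_neq_lj p_neq_leaves unfolding N1_simps by auto
  have "root_node \<noteq> li" using root_node_is_root leaf_li unfolding is_root_def is_leaf_def
    by auto
  moreover have "root_node \<noteq> p" using root_node_is_root tree_node_p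
    unfolding is_root_def is_tree_node_def by auto
  ultimately show "root_node \<in> nodes N1" using root_node_is_root unfolding N1_simps is_root_def
    by auto
qed

lemma N1_degrees: assumes "x \<in> nodes N1" shows "card (parents N1 x) = card (parents N x) \<and> card (children N1 x) = card (children N x)"
proof
  show "card (parents N1 x) = card (parents N x)" using parents_N1[OF assms] plj by simp
  show "card (children N1 x) = card (children N x)"
  proof (cases "x = g")
    case True
    have "card (insert lj (children N g - {p})) = Suc (card (children N g - {p}))"
      using children_g finite_children by simp
    also have "\<dots> = card (children N g)" using children_g finite_children
      by (metis card_Suc_Diff1)
    finally show ?thesis using children_N1[OF assms] True by simp
  next
    case False thus ?thesis using children_N1[OF assms] by simp
  qed
qed

lemma N1_arcs_subset: "arcs N1 \<subseteq> nodes N1 \<times> nodes N1"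
proof
  fix e assume e: "e \<in> arcs N1"
  show "e \<in> nodes N1 \<times> nodes N1"
  proof (cases "e = (g, lj)")
    case True thus ?thesis using N1_nodes by simp
  next
    case False
    obtain a b where ab0: "e = (a,b)" by fastforce
    have ab: "e = (a,b)" "(a,b) \<in> arcs N" "(a,b) \<notin> {(g,p),(p,li),(p,lj)}"
      using e False ab0 unfolding N1_simps by auto
    have "a \<noteq> p" using ab arc_from_p by auto
    moreover have "b \<noteq> p" using ab arc_into_p by auto
    moreover have "a \<noteq> li" using ab no_arc_from_li by auto
    moreover have "b \<noteq> li" using ab arc_into_li by auto
    ultimately show ?thesis using ab arc_tail arc_head unfolding N1_simps by auto
  qed
qed

lemma N1_arcs_trancl: "arcs N1 \<subseteq> (arcs N)\<^sup>+"
proof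
  fix e assume e: "e \<in> arcs N1"
  show "e \<in> (arcs N)\<^sup>+"
  proof (cases "e = (g, lj)")
    case True
    have "(g, p) \<in> arcs N" "(p, lj) \<in> arcs N" using arc_into_p arc_from_p by auto
    thus ?thesis using True by auto
  next
    case False hence "e \<in> arcs N" using e unfolding N1_simps by auto
    thus ?thesis by (rule r_into_trancl')
  qed
qed

lemma N1_nodes_subset: "nodes N1 \<subseteq> nodes N" unfolding N1_simps by auto

lemmas N1_subnet = degree_preserving_subnet[of N1, OF N1_simps(3) N1_nodes_subset N1_arcs_subset N1_arcs_trancl N1_degrees N1_nodes(3)]

lemma phylo_net_N1: "phylo_net n N1" using N1_subnet(1) by unfold_locales

lemma npaths_N1: assumes x: "x \<in> nodes N1" and y: "y \<in> nodes N1" shows "npaths N1 x y = npaths N x y"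
proof (rule npaths_subnet[OF phylo_net_N1 N1_nodes_subset y x])
  have "y \<noteq> p" "y \<noteq> li" using y unfolding N1_simps by auto
  hence p_lj: "npaths N p y = npaths N lj y"
    using npaths_rec[OF p_node] chp li_neq_lj npaths_from_leaf[OF leaf_li] by simp
  fix z assume "z \<in> nodes N1"
  show "(\<Sum>w\<in>children N1 z. npaths N w y) = (\<Sum>w\<in>children N z. npaths N w y)"
  proof (cases "z = g")
    case True
    have "(\<Sum>w\<in>children N1 z. npaths N w y) = npaths N lj y + (\<Sum>w\<in>children N g - {p}. npaths N w y)"
      using children_N1[OF \<open>z \<in> nodes N1\<close>] True children_g finite_children by simp
    also have "\<dots> = (\<Sum>w\<in>children N g. npaths N w y)"
      using p_lj children_g finite_children by (simp add: sum.remove)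
    finally show ?thesis using True by simp
  qed (simp add: children_N1[OF \<open>z \<in> nodes N1\<close>])
qed

lemma node_kinds_N1: assumes "x \<in> nodes N1"
  shows "is_leaf N1 x \<longleftrightarrow> is_leaf N x" "is_tree_node N1 x \<longleftrightarrow> is_tree_node N x"
    "is_reticulation N1 x \<longleftrightarrow> is_reticulation N x"
  using N1_subnet(2-4) assms by auto

lemma leaf_set_N1: "leaf_set N1 = leaf_set N - {li}"
  using node_kinds_N1(1) tree_node_p not_tree_leaf unfolding leaf_set_def N1_simps by auto

lemma ret_set_N1: "ret_set N1 = ret_set N"
proof -
  have "\<not> is_reticulation N li" "\<not> is_reticulation N p"
    using leaf_li tree_node_p unfolding is_leaf_def is_reticulation_def is_tree_node_def by auto
  thus ?thesis using node_kinds_N1(3) unfolding ret_set_def N1_simps by auto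
qed

lemma VT_N1: "VT N1 = VT N - {li, p}"
  using node_kinds_N1(1,2) unfolding VT_def N1_simps by auto

lemma labels_N1: "labels N1 = labels N - {i}"
proof -
  have "labels N1 = lab N ` (leaf_set N - {li})" unfolding labels_def leaf_set_N1 N1_simps ..
  also have "\<dots> = lab N ` leaf_set N - {lab N li}"
    using inj_on_lab li_leaf by (simp add: inj_on_image_set_diff)
  finally show ?thesis using li_leaf unfolding labels_def by simp
qed

lemma leaf_node_N1: assumes "k \<in> labels N1" shows "leaf_node N1 k = leaf_node N k"
proof -
  have k: "k \<in> labels N" "k \<noteq> i" using assms labels_N1 by auto
  have "leaf_node N k \<noteq> li" using leaf_node_spec(2)[OF k(1)] li_leaf(2) k(2) by metis
  hence "leaf_node N k \<in> leaf_set N1" unfolding leaf_set_N1 using leaf_node_spec(1)[OF k(1)]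
    by simp
  moreover have "lab N1 (leaf_node N k) = k" using leaf_node_spec(2)[OF k(1)] N1_simps by simp
  ultimately show ?thesis using phylo_net.leaf_node_lab[OF phylo_net_N1, of "leaf_node N k"] by simp
qed

lemma mu_ret_N1: assumes "x \<in> nodes N1" shows "mu_ret N1 x = mu_ret N x"
proof -
  have "ret_set N \<subseteq> nodes N1" using ret_set_N1 unfolding ret_set_def by auto
  thus ?thesis unfolding mu_ret_def ret_set_N1 using npaths_N1 assms by (intro sum.cong) auto
qed

lemma mu_leaf_N1: assumes "x \<in> nodes N1" shows "mu_leaf N1 x = (mu_leaf N x)(i := 0)"
proof
  fix k show "mu_leaf N1 x k = ((mu_leaf N x)(i := 0)) k"
  proof (cases "k \<in> labels N1")
    case True
    have "leaf_node N1 k \<in> nodes N1" using phylo_net.leaf_node_spec(1)[OF phylo_net_N1 True]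
      unfolding leaf_set_def by simp
    thus ?thesis using True labels_N1 leaf_node_N1 npaths_N1 assms unfolding mu_leaf_def by auto
  next
    case False thus ?thesis using labels_N1 unfolding mu_leaf_def by auto
  qed
qed

lemma mu_pair_li: "mu_pair N li = (0, label_ind i)"
  unfolding mu_pair_def label_ind_def
    using mu_ret_leaf[OF leaf_li] mu_leaf_of_leaf[OF leaf_li] li_leaf by auto

lemma mu_pair_p: "mu_pair N p = (0, label_ind2 i j)"
proof -
  have r: "mu_ret N p = 0"
    using mu_ret_rec[OF p_node] chp li_neq_lj mu_ret_leaf[OF leaf_li] mu_ret_leaf[OF leaf_lj] tree_node_p
    unfolding is_tree_node_def is_reticulation_def by simp
  have "mu_leaf N p = label_ind2 i j"
  proof
    fix k show "mu_leaf N p k = label_ind2 i j k"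
    proof (cases "k \<in> labels N")
      case True
      have lk: "leaf_node N k \<in> leaf_set N" "lab N (leaf_node N k) = k"
        using leaf_node_spec[OF True] by auto
      have "leaf_node N k \<noteq> p" using lk(1) leaf_set_iff tree_node_p not_tree_leaf by auto
      hence "npaths N p (leaf_node N k) = npaths N li (leaf_node N k) + npaths N lj (leaf_node N k)"
        using npaths_rec[OF p_node] chp li_neq_lj by simp
      moreover have "li = leaf_node N k \<longleftrightarrow> k = i"
      proof
        assume "li = leaf_node N k" thus "k = i" using lk(2) li_leaf(2) by simp
      next
        assume "k = i" thus "li = leaf_node N k" using li by simp
      qed
      moreover have "lj = leaf_node N k \<longleftrightarrow> k = j"
      proof
        assume "lj = leaf_node N k" thus "k = j" using lk(2) lj_leaf(2) by simp
      next
        assume "k = j" thus "lj = leaf_node N k" using lj by simp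
      qed
      ultimately show ?thesis unfolding mu_leaf_def label_ind2_def
        using True npaths_from_leaf[OF leaf_li] npaths_from_leaf[OF leaf_lj] ij by auto
    next
      case False thus ?thesis unfolding mu_leaf_def label_ind2_def using il jl by auto
    qed
  qed
  thus ?thesis using r unfolding mu_pair_def by simp
qed

lemma mu_profile_N1: "mu_profile N1 = image_mset (forget_label i) (mu_profile N - {#(0, label_ind i), (0, label_ind2 i j)#})"
proof -
  have VTs: "{li, p} \<subseteq> VT N" using leaf_li tree_node_p li_node p_node unfolding VT_def
    by auto
  have "mset_set (VT N1) = mset_set (VT N) - mset_set {li, p}"
    unfolding VT_N1 using mset_set_Diff[OF finite_VT VTs] .
  moreover have "mset_set {li, p} = {#li, p#}" using p_neq_leaves by simp
  ultimately have m: "mset_set (VT N1) = mset_set (VT N) - {#li, p#}" by simp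
  have sub: "{#li, p#} \<subseteq># mset_set (VT N)" using VTs finite_VT p_neq_leaves
    by (metis \<open>mset_set {li, p} = {#li, p#}\<close> mset_set_set_mset_msubset msubset_mset_set_iff finite.emptyI finite.insertI)
  have "mu_profile N1 = image_mset (mu_pair N1) (mset_set (VT N) - {#li, p#})"
    unfolding mu_profile_def m ..
  also have "\<dots> = image_mset (forget_label i \<circ> mu_pair N) (mset_set (VT N) - {#li, p#})"
  proof (rule image_mset_cong)
    fix x assume "x \<in># mset_set (VT N) - {#li, p#}"
    hence "x \<in> VT N1" using m finite_VT phylo_net.finite_VT[OF phylo_net_N1]
      by (metis elem_mset_set)
    hence x: "x \<in> nodes N1" unfolding VT_def by simp
    show "mu_pair N1 x = (forget_label i \<circ> mu_pair N) x"
      unfolding mu_pair_def forget_label_def using mu_ret_N1[OF x] mu_leaf_N1[OF x] by simp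
  qed
  also have "\<dots> = image_mset (forget_label i) (image_mset (mu_pair N) (mset_set (VT N) - {#li, p#}))"
    by (simp add: multiset.map_comp)
  also have "image_mset (mu_pair N) (mset_set (VT N) - {#li, p#}) = mu_profile N - {#(0, label_ind i), (0, label_ind2 i j)#}"
    unfolding mu_profile_def image_mset_Diff[OF sub] by (simp add: mu_pair_li mu_pair_p)
  finally show ?thesis .
qed

lemma arcs_from_N1: "arcs N = (arcs N1 - {(g,lj)}) \<union> {(g,p),(p,li),(p,lj)}"
proof -
  have "(g, lj) \<notin> arcs N" using arc_into_lj g_neq_p by simp
  moreover have "(g,p) \<in> arcs N" "(p,li) \<in> arcs N" "(p,lj) \<in> arcs N"
    using arc_into_p arc_from_p by auto
  moreover have "(g, lj) \<noteq> (g, p)" "(g, lj) \<noteq> (p, li)" "(g, lj) \<noteq> (p, lj)"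
    using p_neq_leaves g_neq_p by auto
  ultimately show ?thesis unfolding N1_simps by blast
qed

end

lemma net_iso_extend:
  fixes N N1 :: "'a net" and N' N1' :: "'b net" and f :: "'a \<Rightarrow> 'b"
  assumes b1: "bij_betw f (nodes N1) (nodes N1')"
    and a1: "\<And>u v. u \<in> nodes N1 \<Longrightarrow> v \<in> nodes N1 \<Longrightarrow> (u, v) \<in> arcs N1 \<longleftrightarrow> (f u, f v) \<in> arcs N1'"
    and l1: "\<And>v. v \<in> leaf_set N1 \<Longrightarrow> lab N1' (f v) = lab N1 v"
    and V: "nodes N = nodes N1 \<union> X" "nodes N1 \<inter> X = {}"
    and V': "nodes N' = nodes N1' \<union> X'" "nodes N1' \<inter> X' = {}"
    and bX: "bij_betw f X X'"
    and A1V: "arcs N1 \<subseteq> nodes N1 \<times> nodes N1" and A1V': "arcs N1' \<subseteq> nodes N1' \<times> nodes N1'"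
    and A: "arcs N = (arcs N1 - R) \<union> S" and A': "arcs N' = (arcs N1' - map_prod f f ` R) \<union> map_prod f f ` S"
    and RS: "R \<subseteq> nodes N \<times> nodes N" "S \<subseteq> nodes N \<times> nodes N"
    and L: "\<And>v. v \<in> leaf_set N \<Longrightarrow> v \<notin> X \<Longrightarrow> v \<in> leaf_set N1"
    and LX: "\<And>v. v \<in> leaf_set N \<Longrightarrow> v \<in> X \<Longrightarrow> lab N' (f v) = lab N v"
    and lab1: "lab N1 = lab N" and lab1': "lab N1' = lab N'"
  shows "net_iso N N'"
proof -
  have b: "bij_betw f (nodes N) (nodes N')" unfolding V V' using bij_betw_combine[OF b1 bX] V'(2)
    by blast
  have iso_inj: "inj_on f (nodes N)" using bij_betw_imp_inj_on[OF b] .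
  have fX: "\<And>x. x \<in> X \<Longrightarrow> f x \<notin> nodes N1'" using bX V'(2)
    unfolding bij_betw_def by blast
  have a1': "\<And>u v. u \<in> nodes N \<Longrightarrow> v \<in> nodes N \<Longrightarrow> (f u, f v) \<in> arcs N1' \<longleftrightarrow> (u, v) \<in> arcs N1"
  proof -
    fix u v assume uv: "u \<in> nodes N" "v \<in> nodes N"
    show "(f u, f v) \<in> arcs N1' \<longleftrightarrow> (u, v) \<in> arcs N1"
    proof (cases "u \<in> nodes N1 \<and> v \<in> nodes N1")
      case True thus ?thesis using a1 by simp
    next
      case False
      hence "u \<in> X \<or> v \<in> X" using uv V by auto
      hence "f u \<notin> nodes N1' \<or> f v \<notin> nodes N1'" using fX by auto
      thus ?thesis using False A1V A1V' by auto
    qed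
  qed
  have arcs: "\<forall>u\<in>nodes N. \<forall>v\<in>nodes N. (u, v) \<in> arcs N \<longleftrightarrow> (f u, f v) \<in> arcs N'"
  proof (intro ballI)
    fix u v assume "u \<in> nodes N" "v \<in> nodes N"
    thus "(u, v) \<in> arcs N \<longleftrightarrow> (f u, f v) \<in> arcs N'"
      unfolding A A' using a1' RS map_prod_image_mem_iff[OF iso_inj] by simp
  qed
  have labs: "\<forall>v\<in>leaf_set N. lab N' (f v) = lab N v"
  proof
    fix v assume v: "v \<in> leaf_set N"
    show "lab N' (f v) = lab N v"
    proof (cases "v \<in> X")
      case True thus ?thesis using LX v by simp
    next
      case False thus ?thesis using L v l1 lab1 lab1' by metis
    qed
  qed
  show ?thesis unfolding net_iso_def using b arcs labs by blast
qed

context phylo_net begin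

lemma phylo_net_self: "phylo_net n N" by (rule phylo_net_axioms)

lemma leaf_parent: assumes "k \<in> labels N" obtains q where "parents N (leaf_node N k) = {q}" "parent N (leaf_node N k) = q"
proof -
  have "is_leaf N (leaf_node N k)" using leaf_node_spec(1)[OF assms] leaf_set_iff by simp
  then obtain q where "parents N (leaf_node N k) = {q}" using leafD(2) by blast
  thus ?thesis using that parent_eq_singleton by blast
qed

lemma arc_tail_not_leaf: "(x, w) \<in> arcs N \<Longrightarrow> \<not> is_leaf N x"
  using leafD(1) unfolding children_def by blast

lemma cherry_at_exists: assumes "is_cherry N (i, j)" shows "\<exists>li lj p g. cherry_at n N i j li lj p g"
proof -
  have ij: "i \<noteq> j" "i \<in> labels N" "j \<in> labels N" and par: "parent N (leaf_node N i) = parent N (leaf_node N j)"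
    using assms unfolding is_cherry_def by auto
  obtain a where a: "parents N (leaf_node N i) = {a}" "parent N (leaf_node N i) = a"
    using leaf_parent[OF ij(2)] by blast
  obtain b where b: "parents N (leaf_node N j) = {b}" "parent N (leaf_node N j) = b"
    using leaf_parent[OF ij(3)] by blast
  have ab: "a = b" using a b par by simp
  have ne: "leaf_node N i \<noteq> leaf_node N j"
    using leaf_node_spec(2)[OF ij(2)] leaf_node_spec(2)[OF ij(3)] ij(1) by metis
  have sub: "{leaf_node N i, leaf_node N j} \<subseteq> children N a" using a b ab
    unfolding parents_def children_def by auto
  have aV: "a \<in> nodes N" using a(1) parents_subset by auto
  have nl: "\<not> is_leaf N a" using sub leafD(1) by auto
  have "\<not> is_root N a" "\<not> is_reticulation N a"
  proof -
    { fix c assume "children N a = {c}" hence False using sub ne by auto }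
    thus "\<not> is_root N a" "\<not> is_reticulation N a" using rootD(1) retD(1) by blast+
  qed
  hence t: "is_tree_node N a" using node_cases[OF aV] nl by blast
  obtain x y where xy: "x \<noteq> y" "children N a = {x, y}" using treeD(1)[OF t] by blast
  have chs: "children N a = {leaf_node N i, leaf_node N j}" using sub xy ne by auto
  obtain g where g: "parents N a = {g}" using treeD(2)[OF t] by blast
  have "cherry_at n N i j (leaf_node N i) (leaf_node N j) a g"
    by (rule cherry_at.intro[OF phylo_net_self]) (unfold_locales, use ij a b ab chs g in auto)
  thus ?thesis by blast
qed

lemma sum_label_ind: assumes "i \<in> {1..n}" shows "(\<Sum>k\<in>{1..n}. label_ind i k) = 1"
  unfolding label_ind_def using assms by (simp add: sum.delta)

lemma sum_label_ind2: assumes "i \<in> {1..n}" "j \<in> {1..n}" "i \<noteq> j" shows "(\<Sum>k\<in>{1..n}. label_ind2 i j k) = 2"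
proof -
  have "label_ind2 i j = (\<lambda>k. label_ind i k + label_ind j k)"
    unfolding label_ind2_def label_ind_def using assms(3) by auto
  thus ?thesis using sum_label_ind assms by (simp add: sum.distrib)
qed

lemma arc_head_not_root: "(x, c) \<in> arcs N \<Longrightarrow> \<not> is_root N c"
  using rootD(2) unfolding parents_def by blast

lemma leaf_paths_one_cases: assumes "(x, c) \<in> arcs N" "leaf_paths N c = 1"
  shows "is_leaf N c \<or> is_reticulation N c"
proof -
  have cV: "c \<in> nodes N" using arc_head assms(1) .
  have "\<not> is_tree_node N c" using leaf_paths_tree assms(2) by fastforce
  thus ?thesis using node_cases[OF cV] arc_head_not_root[OF assms(1)] by blast
qed

lemma mu_ret_reticulation: "is_reticulation N c \<Longrightarrow> mu_ret N c \<ge> 1"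
  using mu_ret_rec unfolding is_reticulation_def by simp

lemma parents_leaf: assumes "is_leaf N c" "(x, c) \<in> arcs N" shows "parents N c = {x}"
proof -
  obtain q where "parents N c = {q}" using leafD(2)[OF assms(1)] by blast
  thus ?thesis using assms(2) unfolding parents_def by auto
qed

lemma mu_leaf_npaths: "k \<in> labels N \<Longrightarrow> mu_leaf N x k = npaths N x (leaf_node N k)"
  unfolding mu_leaf_def by simp

lemma mu_leaf_nonzero_label: "mu_leaf N x k \<noteq> 0 \<Longrightarrow> k \<in> labels N"
  unfolding mu_leaf_def by (auto split: if_splits)

lemma is_leaf_leaf_node: "k \<in> labels N \<Longrightarrow> is_leaf N (leaf_node N k)"
  using leaf_node_spec(1) leaf_set_iff by blast

lemma leaf_paths_two_tree:
  assumes "x \<in> VT N" "leaf_paths N x = 2"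
  obtains a b where "a \<noteq> b" "children N x = {a, b}" "leaf_paths N a = 1" "leaf_paths N b = 1" "is_tree_node N x"
    "mu_ret N x = mu_ret N a + mu_ret N b"
    "\<And>y. y \<noteq> x \<Longrightarrow> npaths N x y = npaths N a y + npaths N b y"
proof -
  have xV: "x \<in> nodes N" using assms(1) unfolding VT_def by simp
  have t: "is_tree_node N x" using assms leaf_paths_leaf unfolding VT_def by auto
  obtain a b where ab: "a \<noteq> b" "children N x = {a, b}" using treeD(1)[OF t] by blast
  have nl: "\<not> is_leaf N x" "\<not> is_reticulation N x" using t
    unfolding is_tree_node_def is_leaf_def is_reticulation_def by auto
  have "a \<in> nodes N" "b \<in> nodes N" using ab children_subset by auto
  hence ge: "leaf_paths N a \<ge> 1" "leaf_paths N b \<ge> 1" using leaf_paths_pos by auto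
  have "leaf_paths N x = leaf_paths N a + leaf_paths N b" using leaf_paths_rec[OF xV] nl ab by simp
  hence "leaf_paths N a = 1" "leaf_paths N b = 1" using ge assms(2) by auto
  moreover have "mu_ret N x = mu_ret N a + mu_ret N b" using mu_ret_rec[OF xV] nl ab by simp
  moreover have "\<And>y. y \<noteq> x \<Longrightarrow> npaths N x y = npaths N a y + npaths N b y"
    using npaths_rec[OF xV] ab by simp
  ultimately show ?thesis using that ab t by blast
qed

lemma mu_leaf_one_cases:
  assumes d: "is_leaf N d" and b: "is_leaf N b"
    and split: "\<And>y. is_leaf N y \<Longrightarrow> npaths N x y = npaths N d y + npaths N b y"
    and one: "mu_leaf N x k = 1"
  shows "k \<in> labels N \<and> leaf_node N k \<in> {d, b}"
proof -
  have k: "k \<in> labels N" using one mu_leaf_nonzero_label[of x k] by simp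
  have "npaths N d (leaf_node N k) + npaths N b (leaf_node N k) = 1"
    using one split[OF is_leaf_leaf_node[OF k]] mu_leaf_npaths[OF k] by simp
  thus ?thesis using k npaths_from_leaf[OF d] npaths_from_leaf[OF b] by (auto split: if_splits)
qed

lemma cherry_from_mu_pair:
  assumes x: "x \<in> VT N" and s: "mu_pair N x = (0, label_ind2 i j)"
    and ij: "i \<noteq> j" "i \<in> {1..n}" "j \<in> {1..n}"
  shows "is_cherry N (i, j)"
proof -
  have mu: "mu_leaf N x = label_ind2 i j" "mu_ret N x = 0" using s unfolding mu_pair_def by auto
  hence "leaf_paths N x = 2" using leaf_paths_eq_sum sum_label_ind2 ij by simp
  then obtain a b where ab: "a \<noteq> b" "children N x = {a, b}" "leaf_paths N a = 1" "leaf_paths N b = 1"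
    "is_tree_node N x" "mu_ret N x = mu_ret N a + mu_ret N b"
    "\<And>y. y \<noteq> x \<Longrightarrow> npaths N x y = npaths N a y + npaths N b y"
    using leaf_paths_two_tree x by blast
  have arcs: "(x, a) \<in> arcs N" "(x, b) \<in> arcs N" using ab(2) unfolding children_def by auto
  have a: "is_leaf N a" and b: "is_leaf N b"
    using leaf_paths_one_cases[OF arcs(1) ab(3)] leaf_paths_one_cases[OF arcs(2) ab(4)]
      mu_ret_reticulation ab(6) mu(2) by fastforce+
  have split: "npaths N x y = npaths N a y + npaths N b y" if "is_leaf N y" for y
  proof -
    have "y \<noteq> x" using that ab(5) not_leaf_tree by blast
    thus ?thesis using ab(7) by simp
  qed
  have "i \<in> labels N \<and> leaf_node N i \<in> {a, b}" "j \<in> labels N \<and> leaf_node N j \<in> {a, b}"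
    by (rule mu_leaf_one_cases[OF a b, where x = x]; simp add: split mu label_ind2_def)+
  moreover have "parent N a = x" "parent N b = x"
    using parents_leaf[OF a arcs(1)] parents_leaf[OF b arcs(2)] parent_eq_singleton by auto
  ultimately show ?thesis unfolding is_cherry_def using ij(1) by auto
qed

end

lemma net_iso_cherry_lift:
  assumes C: "cherry_at n N i j li lj p g" and C': "cherry_at n N' i j li' lj' p' g'"
    and I: "net_iso (cut_cherry N li lj p g) (cut_cherry N' li' lj' p' g')"
  shows "net_iso N N'"
proof -
  interpret C: cherry_at n N i j li lj p g by (rule C)
  interpret D: cherry_at n N' i j li' lj' p' g' by (rule C')
  obtain f1 where "phylo_iso n C.N1 D.N1 f1"
    using phylo_iso_of_net_iso[OF C.phylo_net_N1 D.phylo_net_N1 I] .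
  then interpret IS: phylo_iso n C.N1 D.N1 f1 .
  have jl1: "j \<in> labels C.N1" using C.labels_N1 C.jl C.ij by auto
  have jl1': "j \<in> labels D.N1" using IS.labels_iso jl1 by simp
  have flj: "f1 lj = lj'"
    using IS.leaf_node_iso[OF jl1] C.leaf_node_N1[OF jl1] D.leaf_node_N1[OF jl1'] C.lj D.lj by simp
  have "(g, lj) \<in> arcs C.N1" unfolding C.N1_simps by simp
  hence "(f1 g, lj') \<in> arcs D.N1" using IS.iso_arcs C.N1_nodes flj by blast
  hence "f1 g \<in> parents D.N1 lj'" unfolding parents_def by simp
  hence fg: "f1 g = g'" using D.parents_N1[OF D.N1_nodes(2)] by simp
  define f where "f x = (if x = li then li' else if x = p then p' else f1 x)" for x
  have fe: "\<And>x. x \<in> nodes C.N1 \<Longrightarrow> f x = f1 x" unfolding f_def C.N1_simps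
    by auto
  have fli: "f li = li'" and fp: "f p = p'" unfolding f_def using C.p_neq_leaves by auto
  have flj': "f lj = lj'" and fg': "f g = g'" using fe C.N1_nodes flj fg by auto
  show ?thesis
  proof (rule net_iso_extend[where ?N1.0 = "C.N1" and N1' = "D.N1" and f = f
        and X = "{li, p}" and X' = "{li', p'}" and R = "{(g, lj)}" and S = "{(g,p),(p,li),(p,lj)}"])
    show "bij_betw f (nodes C.N1) (nodes D.N1)"
      using bij_betw_cong[of "nodes C.N1" f f1] fe IS.iso_bij by blast
    show "\<And>u v. u \<in> nodes C.N1 \<Longrightarrow> v \<in> nodes C.N1 \<Longrightarrow>
      (u, v) \<in> arcs C.N1 \<longleftrightarrow> (f u, f v) \<in> arcs D.N1"
      using fe IS.iso_arcs by simp
    show "\<And>v. v \<in> leaf_set C.N1 \<Longrightarrow> lab D.N1 (f v) = lab C.N1 v"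
      using fe IS.iso_lab unfolding leaf_set_def by simp
    show "nodes N = nodes C.N1 \<union> {li, p}" "nodes C.N1 \<inter> {li, p} = {}"
      unfolding C.N1_simps using C.li_node C.p_node by auto
    show "nodes N' = nodes D.N1 \<union> {li', p'}" "nodes D.N1 \<inter> {li', p'} = {}"
      unfolding D.N1_simps using D.li_node D.p_node by auto
    show "bij_betw f {li, p} {li', p'}" unfolding bij_betw_def
      using fli fp C.p_neq_leaves D.p_neq_leaves by auto
    show "arcs C.N1 \<subseteq> nodes C.N1 \<times> nodes C.N1" by (rule C.N1_arcs_subset)
    show "arcs D.N1 \<subseteq> nodes D.N1 \<times> nodes D.N1" by (rule D.N1_arcs_subset)
    show "arcs N = (arcs C.N1 - {(g, lj)}) \<union> {(g,p),(p,li),(p,lj)}" by (rule C.arcs_from_N1)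
    show "arcs N' = (arcs D.N1 - map_prod f f ` {(g, lj)}) \<union> map_prod f f ` {(g,p),(p,li),(p,lj)}"
      using D.arcs_from_N1 fli fp flj' fg' by simp
    show "{(g, lj)} \<subseteq> nodes N \<times> nodes N" "{(g,p),(p,li),(p,lj)} \<subseteq> nodes N \<times> nodes N"
      using C.g_node C.lj_node C.p_node C.li_node by auto
    show "\<And>v. v \<in> leaf_set N \<Longrightarrow> v \<notin> {li, p} \<Longrightarrow> v \<in> leaf_set C.N1"
      using C.leaf_set_N1 by auto
    show "\<And>v. v \<in> leaf_set N \<Longrightarrow> v \<in> {li, p} \<Longrightarrow> lab N' (f v) = lab N v"
    proof -
      fix v assume v: "v \<in> leaf_set N" "v \<in> {li, p}"
      have "v \<noteq> p" using v(1) C.tree_node_p C.not_tree_leaf C.leaf_set_iff by blast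
      hence "v = li" using v(2) by simp
      thus "lab N' (f v) = lab N v" using fli C.li_leaf D.li_leaf by simp
    qed
    show "lab C.N1 = lab N" "lab D.N1 = lab N'"
      using C.N1_simps D.N1_simps by auto
  qed
qed

section \<open>Reducing a reticulated cherry\<close>

definition cut_ret_cherry :: "'a net \<Rightarrow> 'a \<Rightarrow> 'a \<Rightarrow> 'a \<Rightarrow> 'a \<Rightarrow> 'a \<Rightarrow> 'a \<Rightarrow> 'a net" where
  "cut_ret_cherry N li lj h u q g = N\<lparr>nodes := nodes N - {h, u},
     arcs := (arcs N - {(q,h),(u,h),(h,li),(g,u),(u,lj)}) \<union> {(q,li),(g,lj)}\<rparr>"

definition ret_cherry_update :: "nat \<Rightarrow> nat \<Rightarrow> nat \<times> (nat \<Rightarrow> nat) \<Rightarrow> nat \<times> (nat \<Rightarrow> nat)" where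
  "ret_cherry_update i j s = (fst s - snd s i, (snd s)(i := snd s i - snd s j))"

locale ret_cherry_at = phylo_net +
  fixes i j :: nat and li lj h u q g :: 'a
  assumes ij: "i \<noteq> j"
  and li: "li = leaf_node N i" and lj: "lj = leaf_node N j"
  and il: "i \<in> labels N" and jl: "j \<in> labels N"
  and pli: "parents N li = {h}" and plj: "parents N lj = {u}"
  and chh: "children N h = {li}" and pah: "parents N h = {u, q}" and uq: "u \<noteq> q"
  and chu: "children N u = {h, lj}" and pau: "parents N u = {g}"
begin

lemma li_leaf: "li \<in> leaf_set N" "lab N li = i" using leaf_node_spec[OF il] li by auto
lemma lj_leaf: "lj \<in> leaf_set N" "lab N lj = j" using leaf_node_spec[OF jl] lj by auto
lemma leaf_li: "is_leaf N li" using li_leaf leaf_set_iff by auto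
lemma leaf_lj: "is_leaf N lj" using lj_leaf leaf_set_iff by auto
lemma li_neq_lj: "li \<noteq> lj" using li_leaf lj_leaf ij by auto
lemma arc_into_li: "(a, li) \<in> arcs N \<longleftrightarrow> a = h" using pli
  unfolding parents_def by auto
lemma arc_into_lj: "(a, lj) \<in> arcs N \<longleftrightarrow> a = u" using plj
  unfolding parents_def by auto
lemma arc_into_h: "(a, h) \<in> arcs N \<longleftrightarrow> a = u \<or> a = q" using pah
  unfolding parents_def by auto
lemma arc_from_h: "(h, b) \<in> arcs N \<longleftrightarrow> b = li" using chh
  unfolding children_def by auto
lemma arc_into_u: "(a, u) \<in> arcs N \<longleftrightarrow> a = g" using pau unfolding parents_def
  by auto
lemma arc_from_u: "(u, b) \<in> arcs N \<longleftrightarrow> b = h \<or> b = lj" using chu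
  unfolding children_def by auto
lemma no_arc_from_li: "(li, w) \<notin> arcs N" using leafD(1)[OF leaf_li] unfolding children_def
  by auto
lemma no_arc_from_lj: "(lj, w) \<notin> arcs N" using leafD(1)[OF leaf_lj] unfolding children_def
  by auto
lemma h_node: "h \<in> nodes N" using arc_tail arc_from_h by blast
lemma u_node: "u \<in> nodes N" using arc_tail arc_from_u by blast
lemma q_node: "q \<in> nodes N" using arc_tail arc_into_h by blast
lemma g_node: "g \<in> nodes N" using arc_tail arc_into_u by blast
lemma li_node: "li \<in> nodes N" using arc_head arc_from_h by blast
lemma lj_node: "lj \<in> nodes N" using arc_head arc_from_u by blast
lemma h_neq_u: "h \<noteq> u" using no_self_loop arc_from_u by blast
lemma h_neq_leaves: "h \<noteq> li" "h \<noteq> lj" using no_arc_from_li no_arc_from_lj arc_from_h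
  by blast+
lemma u_neq_leaves: "u \<noteq> li" "u \<noteq> lj" using no_arc_from_li no_arc_from_lj arc_from_u
  by blast+
lemma q_neq_others: "q \<noteq> li" "q \<noteq> lj" "q \<noteq> h"
  using no_arc_from_li no_arc_from_lj arc_into_h no_self_loop by blast+
lemma g_neq_others: "g \<noteq> li" "g \<noteq> lj" "g \<noteq> u"
  using no_arc_from_li no_arc_from_lj arc_into_u no_self_loop by blast+
lemma g_neq_h: "g \<noteq> h"
proof
  assume "g = h"
  hence "u = li" using arc_into_u arc_from_h by blast
  thus False using u_neq_leaves by simp
qed
lemma reticulation_h: "is_reticulation N h"
  unfolding is_reticulation_def indeg_parents outdeg_children using h_node chh pah uq by simp
lemma tree_node_u: "is_tree_node N u"
  unfolding is_tree_node_def indeg_parents outdeg_children using u_node chu pau h_neq_leaves by simp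

lemma suppress_h_eq:
  "suppress (N\<lparr>arcs := arcs N - {(u, h)}\<rparr>) h =
     N\<lparr>nodes := nodes N - {h}, arcs := (arcs N - {(u,h),(q,h),(h,li)}) \<union> {(q,li)}\<rparr>"
proof -
  have "{e \<in> arcs N - {(u, h)}. fst e \<noteq> h \<and> snd e \<noteq> h} = arcs N - {(u,h),(q,h),(h,li)}"
    using arc_from_h arc_into_h by fastforce
  moreover have "{(a, b) |a b. (a, h) \<in> arcs N - {(u, h)} \<and> (h, b) \<in> arcs N - {(u, h)}} = {(q, li)}"
    using arc_into_h arc_from_h uq h_neq_u h_neq_leaves q_neq_others by auto
  ultimately show ?thesis unfolding suppress_def by simp
qed

lemma suppress_u_eq:
  "suppress (N\<lparr>nodes := nodes N - {h}, arcs := (arcs N - {(u,h),(q,h),(h,li)}) \<union> {(q,li)}\<rparr>) u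
     = cut_ret_cherry N li lj h u q g"
proof -
  have "{e \<in> (arcs N - {(u,h),(q,h),(h,li)}) \<union> {(q,li)}. fst e \<noteq> u \<and> snd e \<noteq> u}
      = (arcs N - {(q,h),(u,h),(h,li),(g,u),(u,lj)}) \<union> {(q,li)}"
    using arc_from_u arc_into_u uq u_neq_leaves by fastforce
  moreover have "{(a, b) |a b. (a, u) \<in> (arcs N - {(u,h),(q,h),(h,li)}) \<union> {(q,li)} \<and>
      (u, b) \<in> (arcs N - {(u,h),(q,h),(h,li)}) \<union> {(q,li)}} = {(g, lj)}"
    using arc_into_u arc_from_u uq u_neq_leaves h_neq_leaves g_neq_others h_neq_u li_neq_lj by auto
  moreover have "nodes N - {h} - {u} = nodes N - {h, u}" by auto
  ultimately show ?thesis unfolding suppress_def cut_ret_cherry_def by (simp add: insert_commute)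
qed

lemma reduce_eq: "reduce N (i, j) = cut_ret_cherry N li lj h u q g"
proof -
  have par: "parent N li = h" "parent N lj = u" using parent_eq_singleton pli plj by auto
  have "\<not> is_cherry N (i, j)" unfolding is_cherry_def using par li lj h_neq_u by simp
  moreover have "is_ret_cherry N (i, j)" unfolding is_ret_cherry_def
    using par li lj ij il jl reticulation_h tree_node_u arc_into_h by simp
  ultimately show ?thesis unfolding reduce_def Let_def
    using li[symmetric] lj[symmetric] par suppress_h_eq suppress_u_eq by simp
qed

abbreviation "N1 \<equiv> cut_ret_cherry N li lj h u q g"

lemma N1_simps: "nodes N1 = nodes N - {h, u}"
  "arcs N1 = (arcs N - {(q,h),(u,h),(h,li),(g,u),(u,lj)}) \<union> {(q,li),(g,lj)}"
  "lab N1 = lab N"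
  unfolding cut_ret_cherry_def by simp_all

lemma N1_nodes: "li \<in> nodes N1" "lj \<in> nodes N1" "q \<in> nodes N1" "g \<in> nodes N1" "root_node \<in> nodes N1"
proof -
  show "li \<in> nodes N1" "lj \<in> nodes N1" "q \<in> nodes N1" "g \<in> nodes N1"
    using li_node lj_node q_node g_node h_neq_leaves u_neq_leaves q_neq_others g_neq_others g_neq_h uq
      unfolding N1_simps by auto
  have "root_node \<noteq> h" using root_node_is_root reticulation_h
    unfolding is_root_def is_reticulation_def by auto
  moreover have "root_node \<noteq> u" using root_node_is_root tree_node_u
    unfolding is_root_def is_tree_node_def by auto
  ultimately show "root_node \<in> nodes N1" using root_node_is_root unfolding N1_simps is_root_def
    by auto
qed

lemma N1_nodes_subset: "nodes N1 \<subseteq> nodes N" unfolding N1_simps by auto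

lemma h_in_children_iff: "h \<in> children N x \<longleftrightarrow> x = u \<or> x = q" using arc_into_h
  unfolding children_def by simp
lemma u_in_children_iff: "u \<in> children N x \<longleftrightarrow> x = g" using arc_into_u
  unfolding children_def by simp
lemma li_notin_children: "li \<notin> children N x" if "x \<noteq> h" using arc_into_li that
  unfolding children_def by simp
lemma lj_notin_children: "lj \<notin> children N x" if "x \<noteq> u" using arc_into_lj that
  unfolding children_def by simp

lemma children_N1_other: assumes "x \<in> nodes N1" "x \<noteq> q" "x \<noteq> g" shows "children N1 x = children N x"
proof -
  have "x \<noteq> h" "x \<noteq> u" using assms(1) unfolding N1_simps by auto
  thus ?thesis using assms h_in_children_iff u_in_children_iff unfolding children_def N1_simps by auto
qed

lemma children_N1_q: assumes "q \<noteq> g" shows "children N1 q = insert li (children N q - {h})"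
  using assms u_in_children_iff[of q] uq unfolding children_def N1_simps by auto

lemma children_N1_g: assumes "q \<noteq> g" shows "children N1 g = insert lj (children N g - {u})"
  using assms h_in_children_iff[of g] g_neq_others g_neq_h unfolding children_def N1_simps by auto

lemma children_N1_q_eq_g: assumes "q = g" shows "children N1 g = insert li (insert lj (children N g - {u}) - {h})"
  using assms h_neq_leaves h_neq_u li_neq_lj unfolding children_def N1_simps by auto

lemma parents_N1: assumes "x \<in> nodes N1" shows "parents N1 x = (if x = li then {q} else if x = lj then {g} else parents N x)"
proof -
  have "x \<noteq> h" "x \<noteq> u" using assms(1) unfolding N1_simps by auto
  thus ?thesis using arc_into_li arc_into_lj li_neq_lj unfolding parents_def N1_simps by auto
qed

lemma children_facts: "h \<in> children N q" "u \<in> children N g" "li \<notin> children N q" "lj \<notin> children N g" "lj \<notin> children N q" "li \<notin> children N g"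
  using h_in_children_iff u_in_children_iff li_notin_children lj_notin_children q_neq_others g_neq_others g_neq_h uq by auto

lemma sum_children_N1:
  assumes x: "x \<in> nodes N1" and F: "F li = F h" "F lj = F u"
  shows "(\<Sum>w\<in>children N1 x. F w) = (\<Sum>w\<in>children N x. F w)"
proof -
  have swap_q: "sum F (insert li (children N q - {h})) = sum F (children N q)"
    by (rule sum_insert_remove) (use finite_children children_facts F in auto)
  have swap_g: "sum F (insert lj (children N g - {u})) = sum F (children N g)"
    by (rule sum_insert_remove) (use finite_children children_facts F in auto)
  consider "x \<noteq> q" "x \<noteq> g" | "q = g" "x = g" | "q \<noteq> g" "x = q" | "q \<noteq> g" "x = g"
    by blast
  thus ?thesis
  proof cases
    case 2
    have "sum F (insert li (insert lj (children N g - {u}) - {h})) = sum F (insert lj (children N g - {u}))"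
      by (rule sum_insert_remove)
        (use finite_children children_facts 2 h_neq_u h_neq_leaves li_neq_lj F in auto)
    thus ?thesis using children_N1_q_eq_g 2 swap_g by simp
  qed (use children_N1_other[OF x] children_N1_q children_N1_g swap_q swap_g in auto)
qed

lemma N1_degrees: assumes "x \<in> nodes N1"
  shows "card (parents N1 x) = card (parents N x) \<and> card (children N1 x) = card (children N x)"
proof
  show "card (parents N1 x) = card (parents N x)" using parents_N1[OF assms] pli plj by simp
  show "card (children N1 x) = card (children N x)"
    using sum_children_N1[OF assms, of "\<lambda>_. 1::nat"] by simp
qed

lemma N1_arcs_subset: "arcs N1 \<subseteq> nodes N1 \<times> nodes N1"
proof
  fix e assume e: "e \<in> arcs N1"
  obtain a b where ab0: "e = (a,b)" by fastforce
  show "e \<in> nodes N1 \<times> nodes N1"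
  proof (cases "e \<in> {(q,li),(g,lj)}")
    case True thus ?thesis using N1_nodes by auto
  next
    case False
    have ab: "(a,b) \<in> arcs N" "(a,b) \<notin> {(q,h),(u,h),(h,li),(g,u),(u,lj)}"
      using e False ab0 unfolding N1_simps by auto
    have "a \<noteq> h" using ab arc_from_h by auto
    moreover have "b \<noteq> h" using ab arc_into_h by auto
    moreover have "a \<noteq> u" using ab arc_from_u by auto
    moreover have "b \<noteq> u" using ab arc_into_u by auto
    ultimately show ?thesis using ab ab0 arc_tail arc_head unfolding N1_simps by auto
  qed
qed

lemma N1_arcs_trancl: "arcs N1 \<subseteq> (arcs N)\<^sup>+"
proof
  fix e assume e: "e \<in> arcs N1"
  show "e \<in> (arcs N)\<^sup>+"
  proof (cases "e \<in> {(q,li),(g,lj)}")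
    case True
    have "(q, h) \<in> arcs N" "(h, li) \<in> arcs N" "(g, u) \<in> arcs N" "(u, lj) \<in> arcs N"
      using arc_into_h arc_from_h arc_into_u arc_from_u by auto
    hence "(q, li) \<in> (arcs N)\<^sup>+" "(g, lj) \<in> (arcs N)\<^sup>+" by auto
    thus ?thesis using True by auto
  next
    case False hence "e \<in> arcs N" using e unfolding N1_simps by auto
    thus ?thesis by (rule r_into_trancl')
  qed
qed

lemmas N1_subnet = degree_preserving_subnet[of N1, OF N1_simps(3) N1_nodes_subset N1_arcs_subset N1_arcs_trancl N1_degrees N1_nodes(5)]

lemma phylo_net_N1: "phylo_net n N1" using N1_subnet(1) by unfold_locales

lemma arcs_from_N1: "arcs N = (arcs N1 - {(q,li),(g,lj)}) \<union> {(q,h),(u,h),(h,li),(g,u),(u,lj)}"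
proof -
  have "(q, li) \<notin> arcs N" "(g, lj) \<notin> arcs N" using arc_into_li arc_into_lj q_neq_others g_neq_others
    by auto
  moreover have "{(q,h),(u,h),(h,li),(g,u),(u,lj)} \<subseteq> arcs N"
    using arc_into_h arc_from_h arc_into_u arc_from_u by auto
  moreover have "{(q,li),(g,lj)} \<inter> {(q,h),(u,h),(h,li),(g,u),(u,lj)} = {}"
    using h_neq_leaves u_neq_leaves g_neq_h g_neq_others q_neq_others uq li_neq_lj by auto
  ultimately show ?thesis unfolding N1_simps by blast
qed

end

context ret_cherry_at begin

lemma npaths_N1:
  assumes x: "x \<in> nodes N1" and y: "y \<in> nodes N1" "y \<noteq> li"
  shows "npaths N1 x y = npaths N x y"
proof (rule npaths_subnet[OF phylo_net_N1 N1_nodes_subset y(1) x])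
  have "y \<noteq> h" "y \<noteq> u" using y unfolding N1_simps by auto
  moreover have li_y: "npaths N li y = 0" using npaths_from_leaf[OF leaf_li] y(2) by simp
  ultimately have "npaths N h y = 0" "npaths N u y = npaths N lj y"
    using npaths_rec[OF h_node] npaths_rec[OF u_node] chh chu h_neq_leaves by auto
  with li_y show "(\<Sum>w\<in>children N1 z. npaths N w y) = (\<Sum>w\<in>children N z. npaths N w y)"
    if "z \<in> nodes N1" "z \<noteq> y" for z
    using sum_children_N1[OF that(1), of "\<lambda>w. npaths N w y"] by simp
qed

lemma node_kinds_N1: assumes "x \<in> nodes N1"
  shows "is_leaf N1 x \<longleftrightarrow> is_leaf N x" "is_tree_node N1 x \<longleftrightarrow> is_tree_node N x"
    "is_reticulation N1 x \<longleftrightarrow> is_reticulation N x"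
  using N1_subnet(2-4) assms by auto

lemma leaf_set_N1: "leaf_set N1 = leaf_set N"
proof -
  have "\<not> is_leaf N h" "\<not> is_leaf N u"
    using reticulation_h tree_node_u not_leaf_reticulation not_leaf_tree by auto
  thus ?thesis using node_kinds_N1(1) unfolding leaf_set_def N1_simps by auto
qed

lemma ret_set_N1: "ret_set N1 = ret_set N - {h}"
proof -
  have "\<not> is_reticulation N u" using tree_node_u unfolding is_tree_node_def is_reticulation_def
    by simp
  thus ?thesis using node_kinds_N1(3) unfolding ret_set_def N1_simps by auto
qed

lemma VT_N1: "VT N1 = VT N - {u}"
proof -
  have "h \<notin> VT N" using reticulation_h
    unfolding VT_def is_reticulation_def is_leaf_def is_tree_node_def by auto
  thus ?thesis using node_kinds_N1(1,2) unfolding VT_def N1_simps by auto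
qed

lemma labels_N1: "labels N1 = labels N" unfolding labels_def leaf_set_N1 N1_simps ..

lemma leaf_node_N1: assumes "k \<in> labels N" shows "leaf_node N1 k = leaf_node N k"
proof -
  have "leaf_node N k \<in> leaf_set N1" using leaf_node_spec(1)[OF assms] leaf_set_N1 by simp
  moreover have "lab N1 (leaf_node N k) = k" using leaf_node_spec(2)[OF assms] N1_simps by simp
  ultimately show ?thesis using phylo_net.leaf_node_lab[OF phylo_net_N1, of "leaf_node N k"] by simp
qed

lemma npaths_to_li: assumes "x \<noteq> li" "x \<noteq> h" shows "npaths N x li = npaths N x u + npaths N x q"
  using npaths_one_parent[OF li_node pli assms(1)] npaths_two_parents[OF h_node pah uq assms(2)]
    by simp

lemma npaths_to_lj: assumes "x \<noteq> lj" shows "npaths N x lj = npaths N x u"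
  using npaths_one_parent[OF lj_node plj assms(1)] .

text \<open>In N a path to li enters h from u or from q, and those through u are exactly the paths
  to lj; in N1 only those through q remain.\<close>
lemma npaths_N1_li: assumes "x \<in> nodes N1" shows "npaths N1 x li = npaths N x li - npaths N x lj"
proof (cases "x = li")
  case True
  have "npaths N1 li li = 1" using phylo_net.npaths_rec[OF phylo_net_N1 N1_nodes(1)] by simp
  moreover have "npaths N li li = 1" "npaths N li lj = 0"
    using npaths_from_leaf[OF leaf_li] li_neq_lj by auto
  ultimately show ?thesis using True by simp
next
  case False
  have xh: "x \<noteq> h" using assms unfolding N1_simps by auto
  have "parents N1 li = {q}" using parents_N1[OF N1_nodes(1)] by simp
  hence "npaths N1 x li = npaths N1 x q"
    using phylo_net.npaths_one_parent[OF phylo_net_N1 N1_nodes(1)] False by blast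
  also have "\<dots> = npaths N x q" using npaths_N1[OF assms N1_nodes(3)] q_neq_others by simp
  finally have e: "npaths N1 x li = npaths N x q" .
  show ?thesis
  proof (cases "x = lj")
    case True
    have "npaths N lj q = 0" using npaths_from_leaf[OF leaf_lj] q_neq_others by simp
    moreover have "npaths N lj li = 0" using npaths_from_leaf[OF leaf_lj] li_neq_lj by simp
    ultimately show ?thesis using e True by simp
  next
    case xlj: False
    show ?thesis using e npaths_to_li[OF False xh] npaths_to_lj[OF xlj] by simp
  qed
qed

lemma mu_leaf_ij: "mu_leaf N x i = npaths N x li" "mu_leaf N x j = npaths N x lj"
  using mu_leaf_npaths il jl li lj by auto

text \<open>Paths to the deleted reticulation h correspond to paths to li. At x = li the
  identity holds only thanks to truncated subtraction (0 = 0 - 1).\<close>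
lemma mu_ret_N1: assumes "x \<in> nodes N1" shows "mu_ret N1 x = mu_ret N x - mu_leaf N x i"
proof -
  have hr: "h \<in> ret_set N" using reticulation_h ret_set_iff by simp
  have "mu_ret N1 x = (\<Sum>r\<in>ret_set N - {h}. npaths N x r)"
    unfolding mu_ret_def ret_set_N1
  proof (rule sum.cong)
    fix r assume r: "r \<in> ret_set N - {h}"
    have "r \<noteq> u" using r tree_node_u ret_set_iff
      unfolding is_tree_node_def is_reticulation_def by auto
    moreover have "r \<noteq> li" using r leaf_li ret_set_iff not_leaf_reticulation by auto
    moreover have "r \<in> nodes N" using r unfolding ret_set_def by simp
    ultimately have "r \<in> nodes N1" using r unfolding N1_simps by auto
    thus "npaths N1 x r = npaths N x r" using npaths_N1 assms \<open>r \<noteq> li\<close> by simp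
  qed simp
  moreover have "mu_ret N x = npaths N x h + (\<Sum>r\<in>ret_set N - {h}. npaths N x r)"
    unfolding mu_ret_def using hr finite_ret_set by (simp add: sum.remove)
  moreover have "npaths N x h = mu_leaf N x i \<or> (mu_leaf N x i = 1 \<and> mu_ret N x = 0)"
  proof (cases "x = li")
    case True thus ?thesis using mu_leaf_ij npaths_from_leaf[OF leaf_li] mu_ret_leaf[OF leaf_li]
      by simp
  next
    case False thus ?thesis using mu_leaf_ij npaths_one_parent[OF li_node pli False] by simp
  qed
  ultimately show ?thesis by auto
qed

lemma mu_leaf_N1: assumes "x \<in> nodes N1" shows "mu_leaf N1 x = (mu_leaf N x)(i := mu_leaf N x i - mu_leaf N x j)"
proof
  fix k show "mu_leaf N1 x k = ((mu_leaf N x)(i := mu_leaf N x i - mu_leaf N x j)) k"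
  proof (cases "k \<in> labels N")
    case False thus ?thesis using labels_N1 il unfolding mu_leaf_def by auto
  next
    case True
    show ?thesis
    proof (cases "k = i")
      case True
      thus ?thesis
        using mu_leaf_npaths[OF il] phylo_net.mu_leaf_npaths[OF phylo_net_N1] labels_N1 il leaf_node_N1[OF il] li npaths_N1_li[OF assms] mu_leaf_ij
          by simp
    next
      case False
      have lk: "leaf_node N k \<in> leaf_set N" "leaf_node N k \<noteq> li"
        using leaf_node_spec[OF True] li_leaf(2) False by auto
      have "leaf_node N k \<in> nodes N1"
        using lk(1) leaf_set_N1 phylo_net.leaf_node_spec(1)[OF phylo_net_N1]
          unfolding leaf_set_def N1_simps by auto
      thus ?thesis
        using npaths_N1[OF assms _ lk(2)] False True mu_leaf_npaths[OF True] phylo_net.mu_leaf_npaths[OF phylo_net_N1] labels_N1 leaf_node_N1[OF True]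
        by simp
    qed
  qed
qed

lemma mu_pair_u: "mu_pair N u = (1, label_ind2 i j)"
proof -
  have nr: "\<not> is_reticulation N u" using tree_node_u
    unfolding is_tree_node_def is_reticulation_def by simp
  have "mu_ret N h = 1" using mu_ret_rec[OF h_node] reticulation_h chh mu_ret_leaf[OF leaf_li]
    by simp
  hence r: "mu_ret N u = 1" using mu_ret_rec[OF u_node] nr chu h_neq_leaves mu_ret_leaf[OF leaf_lj]
    by simp
  have "mu_leaf N u = label_ind2 i j"
  proof
    fix k show "mu_leaf N u k = label_ind2 i j k"
    proof (cases "k \<in> labels N")
      case True
      have lk: "is_leaf N (leaf_node N k)" "lab N (leaf_node N k) = k"
        using is_leaf_leaf_node[OF True] leaf_node_spec(2)[OF True] by auto
      have "leaf_node N k \<noteq> u" using lk tree_node_u not_leaf_tree by auto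
      moreover have "leaf_node N k \<noteq> h" using lk reticulation_h not_leaf_reticulation by auto
      ultimately have "npaths N u (leaf_node N k) = npaths N li (leaf_node N k) + npaths N lj (leaf_node N k)"
        using npaths_rec[OF u_node] npaths_rec[OF h_node] chu chh h_neq_leaves by simp
      moreover have "li = leaf_node N k \<longleftrightarrow> k = i"
      proof
        assume "li = leaf_node N k" thus "k = i" using lk(2) li_leaf(2) by simp
      next
        assume "k = i" thus "li = leaf_node N k" using li by simp
      qed
      moreover have "lj = leaf_node N k \<longleftrightarrow> k = j"
      proof
        assume "lj = leaf_node N k" thus "k = j" using lk(2) lj_leaf(2) by simp
      next
        assume "k = j" thus "lj = leaf_node N k" using lj by simp
      qed
      ultimately show ?thesis unfolding mu_leaf_def label_ind2_def
        using True npaths_from_leaf[OF leaf_li] npaths_from_leaf[OF leaf_lj] ij by auto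
    next
      case False thus ?thesis unfolding mu_leaf_def label_ind2_def using il jl by auto
    qed
  qed
  thus ?thesis using r unfolding mu_pair_def by simp
qed

lemma mu_profile_N1: "mu_profile N1 = image_mset (ret_cherry_update i j) (mu_profile N - {#(1, label_ind2 i j)#})"
proof -
  have uVT: "u \<in> VT N" using tree_node_u u_node unfolding VT_def by auto
  have m: "mset_set (VT N1) = mset_set (VT N) - {#u#}"
    unfolding VT_N1 using mset_set_Diff[OF finite_VT, of "{u}"] uVT by simp
  have sub: "{#u#} \<subseteq># mset_set (VT N)" using uVT finite_VT by simp
  have "mu_profile N1 = image_mset (mu_pair N1) (mset_set (VT N) - {#u#})"
    unfolding mu_profile_def m ..
  also have "\<dots> = image_mset (ret_cherry_update i j \<circ> mu_pair N) (mset_set (VT N) - {#u#})"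
  proof (rule image_mset_cong)
    fix x assume "x \<in># mset_set (VT N) - {#u#}"
    hence "x \<in> VT N1" using m finite_VT phylo_net.finite_VT[OF phylo_net_N1]
      by (metis elem_mset_set)
    hence x: "x \<in> nodes N1" unfolding VT_def by simp
    show "mu_pair N1 x = (ret_cherry_update i j \<circ> mu_pair N) x"
      unfolding mu_pair_def ret_cherry_update_def using mu_ret_N1[OF x] mu_leaf_N1[OF x] by simp
  qed
  also have "\<dots> = image_mset (ret_cherry_update i j) (image_mset (mu_pair N) (mset_set (VT N) - {#u#}))"
    by (simp add: multiset.map_comp)
  also have "image_mset (mu_pair N) (mset_set (VT N) - {#u#}) = mu_profile N - {#(1, label_ind2 i j)#}"
    unfolding mu_profile_def image_mset_Diff[OF sub] by (simp add: mu_pair_u)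
  finally show ?thesis .
qed

lemma mu_leaf_j_le_i: assumes "v \<in> VT N" "leaf_paths N v \<ge> 2" shows "mu_leaf N v j \<le> mu_leaf N v i"
proof -
  have t: "is_tree_node N v" using assms leaf_paths_leaf unfolding VT_def by fastforce
  have "v \<noteq> li" "v \<noteq> lj" using t leaf_li leaf_lj not_leaf_tree by auto
  moreover have "v \<noteq> h" using t reticulation_h unfolding is_tree_node_def is_reticulation_def
    by auto
  ultimately show ?thesis using mu_leaf_ij npaths_to_li npaths_to_lj by simp
qed

lemma mu_leaf_j_lt_i_witness: "\<exists>t\<in>VT N. leaf_paths N t \<ge> 2 \<and> mu_leaf N t j < mu_leaf N t i"
proof -
  have qh: "(q, h) \<in> arcs N" using arc_into_h by simp
  have "q \<noteq> root_node" using root_child_not_reticulation reticulation_h qh by blast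
  hence nr: "\<not> is_root N q" using root_node_unique by blast
  have nl: "\<not> is_leaf N q" using arc_tail_not_leaf qh by blast
  obtain t where t: "is_tree_node N t" "(t, q) \<in> (arcs N)\<^sup>*"
  proof (cases "is_tree_node N q")
    case True thus ?thesis using that by blast
  next
    case False
    hence "is_reticulation N q" using node_cases[OF q_node] nr nl by blast
    thus ?thesis using reticulation_has_tree_ancestor that by (meson trancl_into_rtrancl)
  qed
  have tV: "t \<in> nodes N" using t(1) unfolding is_tree_node_def by simp
  have np: "npaths N t q \<ge> 1" using npaths_pos[OF t(2) q_node] .
  have "t \<noteq> li" "t \<noteq> lj" using t leaf_li leaf_lj not_leaf_tree by auto
  moreover have "t \<noteq> h" using t reticulation_h unfolding is_tree_node_def is_reticulation_def
    by auto
  ultimately have "mu_leaf N t j < mu_leaf N t i" using mu_leaf_ij npaths_to_li npaths_to_lj np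
    by simp
  moreover have "t \<in> VT N" using t(1) tV unfolding VT_def by simp
  ultimately show ?thesis using leaf_paths_tree[OF t(1)] by blast
qed

end

context phylo_net begin

lemma ret_cherry_at_exists: assumes "is_ret_cherry N (i, j)" shows "\<exists>li lj h u q g. ret_cherry_at n N i j li lj h u q g"
proof -
  have ij: "i \<noteq> j" "i \<in> labels N" "j \<in> labels N"
    and r: "is_reticulation N (parent N (leaf_node N i))"
    and t: "is_tree_node N (parent N (leaf_node N j))"
    and a: "(parent N (leaf_node N j), parent N (leaf_node N i)) \<in> arcs N"
    using assms unfolding is_ret_cherry_def by auto
  obtain h where h: "parents N (leaf_node N i) = {h}" "parent N (leaf_node N i) = h"
    using leaf_parent[OF ij(2)] by blast
  obtain u where u: "parents N (leaf_node N j) = {u}" "parent N (leaf_node N j) = u"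
    using leaf_parent[OF ij(3)] by blast
  have rh: "is_reticulation N h" and tu: "is_tree_node N u" and uh: "(u, h) \<in> arcs N"
    using r t a h u by auto
  have hli: "(h, leaf_node N i) \<in> arcs N" using h unfolding parents_def by auto
  have ulj: "(u, leaf_node N j) \<in> arcs N" using u unfolding parents_def by auto
  obtain c where c: "children N h = {c}" using retD(1)[OF rh] by blast
  have chh: "children N h = {leaf_node N i}" using c hli unfolding children_def by auto
  obtain x y where xy: "x \<noteq> y" "parents N h = {x, y}" using retD(2)[OF rh] by blast
  have "u \<in> parents N h" using uh unfolding parents_def by simp
  then obtain q where q: "parents N h = {u, q}" "u \<noteq> q" using xy by auto
  have hlj: "h \<noteq> leaf_node N j" using is_leaf_leaf_node[OF ij(3)] rh
    unfolding is_leaf_def is_reticulation_def by auto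
  obtain a' b' where ab: "a' \<noteq> b'" "children N u = {a', b'}" using treeD(1)[OF tu] by blast
  have "{h, leaf_node N j} \<subseteq> children N u" using uh ulj unfolding children_def by auto
  hence chu: "children N u = {h, leaf_node N j}" using ab hlj by auto
  obtain g where g: "parents N u = {g}" using treeD(2)[OF tu] by blast
  have "ret_cherry_at n N i j (leaf_node N i) (leaf_node N j) h u q g"
    by (rule ret_cherry_at.intro[OF phylo_net_self]) (unfold_locales, use ij h u chh q chu g in auto)
  thus ?thesis by blast
qed

lemma ret_cherry_from_children:
  assumes t: "is_tree_node N x" and ax: "(x, a) \<in> arcs N" and bx: "(x, b) \<in> arcs N"
    and ab: "children N x = {a, b}" "a \<noteq> b" and a: "leaf_paths N a = 1" "mu_ret N a = 1"
    and b: "leaf_paths N b = 1" "mu_ret N b = 0"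
    and mu: "mu_leaf N x = label_ind2 i j" and ij: "i \<noteq> j"
  shows "is_ret_cherry N (i, j) \<or> is_ret_cherry N (j, i)"
proof -
  have b_leaf: "is_leaf N b" using leaf_paths_one_cases[OF bx b(1)] mu_ret_reticulation b(2)
    by fastforce
  have a_ret: "is_reticulation N a" using leaf_paths_one_cases[OF ax a(1)] mu_ret_leaf a(2)
    by fastforce
  obtain d where d: "children N a = {d}" using retD(1)[OF a_ret] by blast
  have ad: "(a, d) \<in> arcs N" using d unfolding children_def by auto
  have "leaf_paths N d = 1" "mu_ret N d = 0"
    using leaf_paths_rec[OF arc_head[OF ax]] mu_ret_rec[OF arc_head[OF ax]] a_ret
      not_leaf_reticulation d a by simp_all
  hence d_leaf: "is_leaf N d" using leaf_paths_one_cases[OF ad] mu_ret_reticulation by fastforce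
  have split: "npaths N x y = npaths N d y + npaths N b y" if "is_leaf N y" for y
  proof -
    have "y \<noteq> x" "y \<noteq> a" using that t a_ret not_leaf_tree not_leaf_reticulation
      by blast+
    thus ?thesis using npaths_rec[OF arc_tail[OF ax]] npaths_rec[OF arc_head[OF ax]] ab d by simp
  qed
  have "i \<in> labels N \<and> leaf_node N i \<in> {d, b}" "j \<in> labels N \<and> leaf_node N j \<in> {d, b}"
    by (rule mu_leaf_one_cases[OF d_leaf b_leaf, where x = x]; simp add: split mu label_ind2_def)+
  hence labels: "i \<in> labels N" "j \<in> labels N"
    and leaves: "leaf_node N i \<in> {d, b}" "leaf_node N j \<in> {d, b}" by auto
  have "leaf_node N i \<noteq> leaf_node N j"
    using leaf_node_spec(2)[OF labels(1)] leaf_node_spec(2)[OF labels(2)] ij by metis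
  moreover have "parent N d = a" "parent N b = x"
    using parents_leaf[OF d_leaf ad] parents_leaf[OF b_leaf bx] parent_eq_singleton by auto
  ultimately show ?thesis
    using leaves labels ij a_ret t ax unfolding is_ret_cherry_def by auto
qed

lemma ret_cherry_from_mu_pair:
  assumes x: "x \<in> VT N" and s: "mu_pair N x = (1, label_ind2 i j)" and ij: "i \<noteq> j" "i \<in> {1..n}" "j \<in> {1..n}"
  shows "is_ret_cherry N (i, j) \<or> is_ret_cherry N (j, i)"
proof -
  have cx: "mu_leaf N x = label_ind2 i j" "mu_ret N x = 1" using s unfolding mu_pair_def by auto
  have "leaf_paths N x = 2" using leaf_paths_eq_sum cx sum_label_ind2 ij by simp
  then obtain a b where ab: "a \<noteq> b" "children N x = {a, b}" "leaf_paths N a = 1" "leaf_paths N b = 1" "is_tree_node N x"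
    "mu_ret N x = mu_ret N a + mu_ret N b" "\<And>y. y \<noteq> x \<Longrightarrow> npaths N x y = npaths N a y + npaths N b y"
    using leaf_paths_two_tree x by blast
  have arcs: "(x, a) \<in> arcs N" "(x, b) \<in> arcs N" using ab(2) unfolding children_def by auto
  have "(mu_ret N a = 1 \<and> mu_ret N b = 0) \<or> (mu_ret N a = 0 \<and> mu_ret N b = 1)"
    using ab(6) cx(2) by auto
  thus ?thesis
  proof
    assume "mu_ret N a = 1 \<and> mu_ret N b = 0"
    thus ?thesis
      using ret_cherry_from_children[OF ab(5) arcs ab(2) ab(1) ab(3) _ ab(4) _ cx(1) ij(1)] by simp
  next
    assume "mu_ret N a = 0 \<and> mu_ret N b = 1"
    moreover have "children N x = {b, a}" using ab(2) by auto
    ultimately show ?thesis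
      using ret_cherry_from_children[OF ab(5) arcs(2) arcs(1) _ _ ab(4) _ ab(3) _ cx(1) ij(1)] ab(1)
        by simp
  qed
qed

end

lemma net_iso_ret_cherry_lift:
  assumes C: "ret_cherry_at n N i j li lj h u q g" and C': "ret_cherry_at n N' i j li' lj' h' u' q' g'"
    and I: "net_iso (cut_ret_cherry N li lj h u q g) (cut_ret_cherry N' li' lj' h' u' q' g')"
  shows "net_iso N N'"
proof -
  interpret C: ret_cherry_at n N i j li lj h u q g by (rule C)
  interpret D: ret_cherry_at n N' i j li' lj' h' u' q' g' by (rule C')
  obtain f1 where "phylo_iso n C.N1 D.N1 f1"
    using phylo_iso_of_net_iso[OF C.phylo_net_N1 D.phylo_net_N1 I] .
  then interpret IS: phylo_iso n C.N1 D.N1 f1 .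
  have il1: "i \<in> labels C.N1" "j \<in> labels C.N1" using C.labels_N1 C.il C.jl by auto
  have il1': "i \<in> labels D.N1" "j \<in> labels D.N1"
    using IS.labels_iso il1 by auto
  have fli: "f1 li = li'"
    using IS.leaf_node_iso[OF il1(1)] C.leaf_node_N1[OF C.il] D.leaf_node_N1[OF D.il] C.li D.li
      by simp
  have flj: "f1 lj = lj'"
    using IS.leaf_node_iso[OF il1(2)] C.leaf_node_N1[OF C.jl] D.leaf_node_N1[OF D.jl] C.lj D.lj
      by simp
  have "(q, li) \<in> arcs C.N1" unfolding C.N1_simps by simp
  hence "(f1 q, li') \<in> arcs D.N1" using IS.iso_arcs C.N1_nodes fli by blast
  hence "f1 q \<in> parents D.N1 li'" unfolding parents_def by simp
  hence fq: "f1 q = q'" using D.parents_N1[OF D.N1_nodes(1)] by simp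
  have "(g, lj) \<in> arcs C.N1" unfolding C.N1_simps by simp
  hence "(f1 g, lj') \<in> arcs D.N1" using IS.iso_arcs C.N1_nodes flj by blast
  hence "f1 g \<in> parents D.N1 lj'" unfolding parents_def by simp
  hence fg: "f1 g = g'" using D.parents_N1[OF D.N1_nodes(2)] D.li_neq_lj by simp
  define f where "f x = (if x = h then h' else if x = u then u' else f1 x)" for x
  have fe: "\<And>x. x \<in> nodes C.N1 \<Longrightarrow> f x = f1 x" unfolding f_def C.N1_simps
    by auto
  have fh: "f h = h'" and fu: "f u = u'" unfolding f_def using C.h_neq_u by auto
  have fli': "f li = li'" and flj': "f lj = lj'" and fq': "f q = q'" and fg': "f g = g'"
    using fe C.N1_nodes fli flj fq fg by auto
  show ?thesis
  proof (rule net_iso_extend[where ?N1.0 = "C.N1" and N1' = "D.N1" and f = f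
        and X = "{h, u}" and X' = "{h', u'}" and R = "{(q,li),(g,lj)}" and S = "{(q,h),(u,h),(h,li),(g,u),(u,lj)}"])
    show "bij_betw f (nodes C.N1) (nodes D.N1)"
      using bij_betw_cong[of "nodes C.N1" f f1] fe IS.iso_bij by blast
    show "\<And>a b. a \<in> nodes C.N1 \<Longrightarrow> b \<in> nodes C.N1 \<Longrightarrow>
      (a, b) \<in> arcs C.N1 \<longleftrightarrow> (f a, f b) \<in> arcs D.N1"
      using fe IS.iso_arcs by simp
    show "\<And>v. v \<in> leaf_set C.N1 \<Longrightarrow> lab D.N1 (f v) = lab C.N1 v"
      using fe IS.iso_lab unfolding leaf_set_def by simp
    show "nodes N = nodes C.N1 \<union> {h, u}" "nodes C.N1 \<inter> {h, u} = {}"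
      unfolding C.N1_simps using C.h_node C.u_node by auto
    show "nodes N' = nodes D.N1 \<union> {h', u'}" "nodes D.N1 \<inter> {h', u'} = {}"
      unfolding D.N1_simps using D.h_node D.u_node by auto
    show "bij_betw f {h, u} {h', u'}" unfolding bij_betw_def using fh fu C.h_neq_u D.h_neq_u by auto
    show "arcs C.N1 \<subseteq> nodes C.N1 \<times> nodes C.N1" by (rule C.N1_arcs_subset)
    show "arcs D.N1 \<subseteq> nodes D.N1 \<times> nodes D.N1" by (rule D.N1_arcs_subset)
    show "arcs N = (arcs C.N1 - {(q,li),(g,lj)}) \<union> {(q,h),(u,h),(h,li),(g,u),(u,lj)}"
      by (rule C.arcs_from_N1)
    show "arcs N' = (arcs D.N1 - map_prod f f ` {(q,li),(g,lj)}) \<union>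
        map_prod f f ` {(q,h),(u,h),(h,li),(g,u),(u,lj)}"
      using D.arcs_from_N1 fli' flj' fq' fg' fh fu by simp
    show "{(q,li),(g,lj)} \<subseteq> nodes N \<times> nodes N" "{(q,h),(u,h),(h,li),(g,u),(u,lj)} \<subseteq> nodes N \<times> nodes N"
      using C.g_node C.lj_node C.q_node C.li_node C.h_node C.u_node by auto
    show "\<And>v. v \<in> leaf_set N \<Longrightarrow> v \<notin> {h, u} \<Longrightarrow> v \<in> leaf_set C.N1"
      using C.leaf_set_N1 by auto
    show "\<And>v. v \<in> leaf_set N \<Longrightarrow> v \<in> {h, u} \<Longrightarrow> lab N' (f v) = lab N v"
    proof -
      fix v assume v: "v \<in> leaf_set N" "v \<in> {h, u}"
      have "is_leaf N v" using v(1) C.leaf_set_iff by simp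
      moreover have "\<not> is_leaf N h" "\<not> is_leaf N u"
        using C.reticulation_h C.tree_node_u C.not_leaf_reticulation C.not_leaf_tree by auto
      ultimately show "lab N' (f v) = lab N v" using v(2) by auto
    qed
    show "lab C.N1 = lab N" "lab D.N1 = lab N'"
      using C.N1_simps D.N1_simps by auto
  qed
qed

section \<open>Equal \<mu>-representations force isomorphism\<close>

context phylo_net begin

lemma mem_mu_profile: "x \<in># mu_profile N \<longleftrightarrow> (\<exists>v\<in>VT N. mu_pair N v = x)"
  unfolding mu_profile_def using finite_VT by auto

lemma leaf_paths_mu_pair: "leaf_paths N x = (\<Sum>k\<in>{1..n}. snd (mu_pair N x) k)"
  unfolding mu_pair_def using leaf_paths_eq_sum by simp

lemma mu_unlist_mu_rep: "image_mset (mu_unlist n) (mu_rep n N) = mu_profile N"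
proof -
  have "image_mset (mu_unlist n) (mu_rep n N) = image_mset (mu_unlist n \<circ> mu_list n) (mu_profile N)"
    unfolding mu_rep_mu_list by (simp add: multiset.map_comp)
  also have "\<dots> = image_mset id (mu_profile N)"
  proof (rule image_mset_cong)
    fix s assume "s \<in># mu_profile N"
    then obtain v where "mu_pair N v = s" using mem_mu_profile by blast
    hence "\<And>k. snd s k \<noteq> 0 \<Longrightarrow> 1 \<le> k \<and> k \<le> n"
      using mu_leaf_support unfolding mu_pair_def by auto
    thus "(mu_unlist n \<circ> mu_list n) s = id s" using mu_unlist_mu_list by simp
  qed
  finally show ?thesis by simp
qed

lemma root_leaf_if_VT_singleton:
  assumes VT: "VT N = {w}" and w: "is_leaf N w"
  shows "nodes N = {root_node, w}" "arcs N = {(root_node, w)}"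
proof -
  obtain c where c: "children N root_node = {c}" using rootD(1)[OF root_node_is_root] by blast
  have rc: "(root_node, c) \<in> arcs N" using c unfolding children_def by auto
  have "\<not> is_reticulation N c" "\<not> is_root N c"
    using root_child_not_reticulation arc_head_not_root rc by blast+
  hence "c \<in> VT N" using node_cases[OF arc_head[OF rc]] arc_head[OF rc] unfolding VT_def
    by blast
  hence cw: "c = w" using VT by simp
  have reach: "x \<in> {root_node, w}" if "(root_node, x) \<in> (arcs N)\<^sup>*" for x
    using that
  proof (cases rule: converse_rtranclE)
    case (step z)
    hence "z = w" using c cw unfolding children_def by auto
    thus ?thesis using step(2) leafD(1)[OF w] unfolding children_def
      by (auto elim: converse_rtranclE)
  qed simp
  have "root_node \<in> nodes N" "w \<in> nodes N"
    using root_node_is_root w unfolding is_root_def is_leaf_def by auto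
  thus nodes: "nodes N = {root_node, w}" using reach root_reaches by blast
  show "arcs N = {(root_node, w)}"
  proof
    show "arcs N \<subseteq> {(root_node, w)}"
    proof (clarify)
      fix a b assume ab: "(a, b) \<in> arcs N"
      have "a \<noteq> w" using ab leafD(1)[OF w] unfolding children_def by auto
      moreover have "a \<noteq> b" using ab no_self_loop by blast
      moreover have "a \<in> {root_node, w}" "b \<in> {root_node, w}"
        using arc_tail[OF ab] arc_head[OF ab] nodes by simp_all
      ultimately show "a = root_node \<and> b = w" by auto
    qed
  qed (use rc cw in auto)
qed

end

lemma net_iso_root_leaf:
  fixes N :: "'a net" and N' :: "'b net"
  assumes N: "r \<noteq> l" "nodes N = {r, l}" "arcs N = {(r, l)}"
    and N': "r' \<noteq> l'" "nodes N' = {r', l'}" "arcs N' = {(r', l')}"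
    and lab: "lab N' l' = lab N l"
  shows "net_iso N N'"
proof -
  define f where "f x = (if x = r then r' else l')" for x
  have "bij_betw f (nodes N) (nodes N')" using N N' unfolding bij_betw_def inj_on_def f_def by auto
  moreover have "\<forall>a\<in>nodes N. \<forall>b\<in>nodes N. (a, b) \<in> arcs N \<longleftrightarrow> (f a, f b) \<in> arcs N'"
    using N N' unfolding f_def by auto
  moreover have "leaf_set N \<subseteq> {l}"
    using N unfolding leaf_set_def is_leaf_def outdeg_def by auto
  hence "\<forall>v\<in>leaf_set N. lab N' (f v) = lab N v" using lab N(1) unfolding f_def by auto
  ultimately show ?thesis unfolding net_iso_def by blast
qed

context phylo_net begin

lemma net_iso_trivial:
  fixes N' :: "'b net"
  assumes T: "trivial_net N" and N': "phylo_net n N'" and eq: "mu_profile N = mu_profile N'"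
  shows "net_iso N N'"
proof -
  interpret B: phylo_net n N' by (rule N')
  obtain r l where rl: "r \<noteq> l" "nodes N = {r, l}" "arcs N = {(r, l)}"
    using T unfolding trivial_net_def by blast
  have "children N r = {l}" "children N l = {}" "parents N l = {r}"
    using rl unfolding children_def parents_def by auto
  hence l: "is_leaf N l" and r: "\<not> is_leaf N r" "\<not> is_tree_node N r"
    using rl unfolding is_leaf_def is_tree_node_def indeg_parents outdeg_children by auto
  have "VT N = {l}" using rl l r unfolding VT_def by auto
  hence profile: "image_mset (mu_pair N') (mset_set (VT N')) = {#mu_pair N l#}"
    using eq unfolding mu_profile_def by simp
  hence "size (mset_set (VT N')) = 1" by (metis size_image_mset size_single)
  then obtain w where w_mset: "mset_set (VT N') = {#w#}" using size_1_singleton_mset by blast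
  hence w: "mu_pair N' w = mu_pair N l" using profile by simp
  have VT': "VT N' = {w}" using w_mset B.finite_VT
    by (metis finite_set_mset_mset_set set_mset_single)
  have "leaf_paths N' w = 1" using B.leaf_paths_mu_pair leaf_paths_mu_pair w leaf_paths_leaf[OF l]
    by simp
  hence w_leaf: "is_leaf N' w" using VT' B.leaf_paths_tree unfolding VT_def by fastforce
  have "mu_leaf N' w (lab N l) = 1" using w mu_leaf_of_leaf[OF l] unfolding mu_pair_def by simp
  hence lab: "lab N' w = lab N l" using B.mu_leaf_of_leaf[OF w_leaf] by (auto split: if_splits)
  have "B.root_node \<noteq> w"
    using B.root_node_is_root w_leaf unfolding is_root_def is_leaf_def by auto
  from net_iso_root_leaf[OF rl this B.root_leaf_if_VT_singleton[OF VT' w_leaf] lab]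
  show ?thesis .
qed

end

context phylo_net begin

lemma cherry_transfer:
  fixes N' :: "'b net"
  assumes N': "phylo_net n N'" and eq: "mu_profile N = mu_profile N'" and c: "is_cherry N (i, j)"
  shows "is_cherry N' (i, j)"
proof -
  obtain li lj p g where "cherry_at n N i j li lj p g" using cherry_at_exists[OF c] by blast
  then interpret C: cherry_at n N i j li lj p g .
  have "(0, label_ind2 i j) \<in># mu_profile N'"
    using eq mem_mu_profile C.mu_pair_p C.tree_node_p C.p_node unfolding VT_def by auto
  then obtain x where "x \<in> VT N'" "mu_pair N' x = (0, label_ind2 i j)"
    using phylo_net.mem_mu_profile[OF N'] by blast
  thus ?thesis using phylo_net.cherry_from_mu_pair[OF N'] C.ij C.il C.jl labels_subset by blast
qed

text \<open>The vector (1, e_i + e_j) only shows that (i, j) or (j, i) is a reticulated cherry of N'.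
  The orientation (j, i) is excluded by a tree node above the reticulation: in N it has
  more paths to i than to j, which is impossible in N' if (j, i) were a reticulated cherry.\<close>
lemma ret_cherry_transfer:
  fixes N' :: "'b net"
  assumes N': "phylo_net n N'" and eq: "mu_profile N = mu_profile N'" and c: "is_ret_cherry N (i, j)"
  shows "is_ret_cherry N' (i, j)"
proof (rule ccontr)
  assume not_ij: "\<not> is_ret_cherry N' (i, j)"
  interpret B: phylo_net n N' by (rule N')
  obtain li lj h u q g where "ret_cherry_at n N i j li lj h u q g" using ret_cherry_at_exists[OF c]
    by blast
  then interpret C: ret_cherry_at n N i j li lj h u q g .
  have "(1, label_ind2 i j) \<in># mu_profile N'"
    using eq mem_mu_profile C.mu_pair_u C.tree_node_u C.u_node unfolding VT_def by auto
  then obtain x where "x \<in> VT N'" "mu_pair N' x = (1, label_ind2 i j)" using B.mem_mu_profile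
    by blast
  hence "is_ret_cherry N' (j, i)"
    using B.ret_cherry_from_mu_pair C.ij C.il C.jl labels_subset not_ij by blast
  then obtain li' lj' h' u' q' g' where "ret_cherry_at n N' j i li' lj' h' u' q' g'"
    using B.ret_cherry_at_exists by blast
  then interpret D: ret_cherry_at n N' j i li' lj' h' u' q' g' .
  obtain t where t: "t \<in> VT N" "leaf_paths N t \<ge> 2" "mu_leaf N t j < mu_leaf N t i"
    using C.mu_leaf_j_lt_i_witness by blast
  have "mu_pair N t \<in># mu_profile N'" using mem_mu_profile t(1) eq by metis
  then obtain t' where t': "t' \<in> VT N'" "mu_pair N' t' = mu_pair N t" using B.mem_mu_profile
    by blast
  have "leaf_paths N' t' \<ge> 2" using t' t(2) leaf_paths_mu_pair B.leaf_paths_mu_pair by simp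
  hence "mu_leaf N' t' i \<le> mu_leaf N' t' j" using D.mu_leaf_j_le_i t'(1) by simp
  moreover have "mu_leaf N' t' = mu_leaf N t" using t'(2) unfolding mu_pair_def by simp
  ultimately show False using t(3) by simp
qed

end

lemma reduce_step:
  fixes N :: "'a net" and N' :: "'b net"
  assumes N: "phylo_net n N" and N': "phylo_net n N'" and eq: "mu_profile N = mu_profile N'"
    and s: "reducible_pair N s"
  shows "phylo_net n (reduce N s) \<and> phylo_net n (reduce N' s) \<and>
    mu_profile (reduce N s) = mu_profile (reduce N' s) \<and>
    (net_iso (reduce N s) (reduce N' s) \<longrightarrow> net_iso N N')"
proof -
  obtain i j where ij: "s = (i, j)" by fastforce
  consider (cherry) "is_cherry N (i, j)" | (ret) "is_ret_cherry N (i, j)"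
    using s ij unfolding reducible_pair_def by blast
  thus ?thesis
  proof cases
    case cherry
    obtain li lj p g where C: "cherry_at n N i j li lj p g"
      using phylo_net.cherry_at_exists[OF N cherry] by blast
    obtain li' lj' p' g' where C': "cherry_at n N' i j li' lj' p' g'"
      using phylo_net.cherry_at_exists[OF N'] phylo_net.cherry_transfer[OF N N' eq cherry] by blast
    show ?thesis
      using cherry_at.reduce_eq[OF C] cherry_at.reduce_eq[OF C'] cherry_at.phylo_net_N1[OF C]
        cherry_at.phylo_net_N1[OF C'] cherry_at.mu_profile_N1[OF C] cherry_at.mu_profile_N1[OF C']
        net_iso_cherry_lift[OF C C'] eq ij by simp
  next
    case ret
    obtain li lj h u q g where C: "ret_cherry_at n N i j li lj h u q g"
      using phylo_net.ret_cherry_at_exists[OF N ret] by blast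
    obtain li' lj' h' u' q' g' where C': "ret_cherry_at n N' i j li' lj' h' u' q' g'"
      using phylo_net.ret_cherry_at_exists[OF N'] phylo_net.ret_cherry_transfer[OF N N' eq ret]
        by blast
    show ?thesis
      using ret_cherry_at.reduce_eq[OF C] ret_cherry_at.reduce_eq[OF C'] ret_cherry_at.phylo_net_N1[OF C]
        ret_cherry_at.phylo_net_N1[OF C'] ret_cherry_at.mu_profile_N1[OF C]
        ret_cherry_at.mu_profile_N1[OF C'] net_iso_ret_cherry_lift[OF C C'] eq ij by simp
  qed
qed

lemma net_iso_of_mu_profile_eq:
  fixes N :: "'a net" and N' :: "'b net"
  assumes "phylo_net n N" "phylo_net n N'" "reducible_seq N S" "trivial_net (reduce_seq N S)"
    and "mu_profile N = mu_profile N'"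
  shows "net_iso N N'"
  using assms
proof (induction S arbitrary: N N')
  case Nil thus ?case using phylo_net.net_iso_trivial by simp
next
  case (Cons s S)
  hence "reducible_pair N s" by simp
  with Cons show ?case
    using reduce_step[OF Cons.prems(1,2,5)] Cons.IH[of "reduce N s" "reduce N' s"] by simp
qed

theorem mainTheorem11:
  fixes n :: nat and N :: "'a net" and N' :: "'b net"
  assumes "orchard n N" and "orchard n N'"
  shows "net_iso N N' \<longleftrightarrow> mu_rep n N = mu_rep n N'"
proof -
  have P: "phylo_net n N" "phylo_net n N'" using assms unfolding orchard_def
    by (auto intro: phylo_net.intro)
  obtain S where S: "reducible_seq N S" "trivial_net (reduce_seq N S)" using assms(1)
    unfolding orchard_def by blast
  show ?thesis
  proof
    assume "net_iso N N'"
    thus "mu_rep n N = mu_rep n N'" unfolding mu_rep_mu_list using mu_profile_eq_if_net_iso[OF P]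
      by simp
  next
    assume "mu_rep n N = mu_rep n N'"
    hence "mu_profile N = mu_profile N'"
      using phylo_net.mu_unlist_mu_rep[OF P(1)] phylo_net.mu_unlist_mu_rep[OF P(2)] by metis
    thus "net_iso N N'" using net_iso_of_mu_profile_eq[OF P S] by simp
  qed
qed

end
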